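(* Let $n\geq 2$, $c\geq 1$, and let $L_{n,c}$ be the free metabelian nilpotent Lie algebra of nilpotency class $c$ generated by $x_1,\ldots,x_n$ over a field $K$ of characteristic zero. For $u\in L_{n,c}$ let \[\varepsilon_u=\exp(\mathrm{ad}\,u)=1+\mathrm{ad}\,u+\tfrac{1}{2}\mathrm{ad}^2u+\cdots+\tfrac{1}{(c-1)!}\mathrm{ad}^{c-1}u,\] where $(\mathrm{ad}\,u)(v)=[v,u]$. Let $\mathrm{Inn}(L_{n,c}^{S_n})$ be the set of inner automorphisms $\varepsilon_u$ ($u\in L_{n,c}$) of $L_{n,c}$ that map $L_{n,c}^{S_n}$ into itself. Then \[\mathrm{Inn}(L_{n,c}^{S_n})=\{\varepsilon_u\mid u\in L_{n,c}^{S_n}\setminus\gamma^c(L_{n,c})^{S_n}\}\cup\{1\}.\]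
   Context: $L_{n,c}=L_n/(L_n''+\gamma^{c+1}(L_n))$, where $L_n$ is the free Lie algebra on $x_1,\ldots,x_n$, $\gamma^1=L_n$, $\gamma^k=[\gamma^{k-1},L_n]$, $L_n''=[L_n',L_n']$; $\gamma^c(L_{n,c})$ is the image of $\gamma^c(L_n)$ in $L_{n,c}$. The symmetric group $S_n$ acts on $L_{n,c}$ by $\pi\, p(x_1,\ldots,x_n)=p(x_{\pi(1)},\ldots,x_{\pi(n)})$; $L_{n,c}^{S_n}$ is the algebra of symmetric elements and $\gamma^c(L_{n,c})^{S_n}$ the set of symmetric elements of $\gamma^c(L_{n,c})$. Each $\varepsilon_u$ is an automorphism of $L_{n,c}$, and $\varepsilon_u=1$ when $u\in\gamma^c(L_{n,c})$. *)

theory Defs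
  imports "HOL-Combinatorics.Permutations"
begin

text \<open>Noncommutative polynomials (free associative algebra) over K in variables
indexed by naturals, represented as coefficient functions on words.
The free Lie algebra L_n is modelled as the Lie subalgebra of the free
associative algebra generated by x_0, ..., x_(n-1) (Lie polynomials).\<close>

type_synonym 'k ncpoly = "nat list \<Rightarrow> 'k"

definition nczero :: "'k::field ncpoly" where
  "nczero = (\<lambda>w. 0)"

definition ncadd :: "'k::field ncpoly \<Rightarrow> 'k ncpoly \<Rightarrow> 'k ncpoly" where
  "ncadd p q = (\<lambda>w. p w + q w)"

definition ncsub :: "'k::field ncpoly \<Rightarrow> 'k ncpoly \<Rightarrow> 'k ncpoly" where
  "ncsub p q = (\<lambda>w. p w - q w)"

definition ncsmul :: "'k::field \<Rightarrow> 'k ncpoly \<Rightarrow> 'k ncpoly" where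
  "ncsmul a p = (\<lambda>w. a * p w)"

definition ncmul :: "'k::field ncpoly \<Rightarrow> 'k ncpoly \<Rightarrow> 'k ncpoly" where
  "ncmul p q = (\<lambda>w. \<Sum>i\<le>length w. p (take i w) * q (drop i w))"

definition ncvar :: "nat \<Rightarrow> 'k::field ncpoly" where
  "ncvar i = (\<lambda>w. if w = [i] then 1 else 0)"

definition lbr :: "'k::field ncpoly \<Rightarrow> 'k ncpoly \<Rightarrow> 'k ncpoly" where
  "lbr p q = ncsub (ncmul p q) (ncmul q p)"

inductive_set freeLie :: "nat \<Rightarrow> 'k::field ncpoly set" for n :: nat where
  zero: "nczero \<in> freeLie n"
| var: "i < n \<Longrightarrow> ncvar i \<in> freeLie n"
| add: "p \<in> freeLie n \<Longrightarrow> q \<in> freeLie n \<Longrightarrow> ncadd p q \<in> freeLie n"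
| smul: "p \<in> freeLie n \<Longrightarrow> ncsmul a p \<in> freeLie n"
| br: "p \<in> freeLie n \<Longrightarrow> q \<in> freeLie n \<Longrightarrow> lbr p q \<in> freeLie n"

inductive_set lspan :: "'k::field ncpoly set \<Rightarrow> 'k ncpoly set" for S where
  zero: "nczero \<in> lspan S"
| base: "p \<in> S \<Longrightarrow> p \<in> lspan S"
| add: "p \<in> lspan S \<Longrightarrow> q \<in> lspan S \<Longrightarrow> ncadd p q \<in> lspan S"
| smul: "p \<in> lspan S \<Longrightarrow> ncsmul a p \<in> lspan S"

definition brset :: "'k::field ncpoly set \<Rightarrow> 'k ncpoly set \<Rightarrow> 'k ncpoly set" where
  "brset A B = lspan {lbr a b | a b. a \<in> A \<and> b \<in> B}"

primrec lcs :: "nat \<Rightarrow> nat \<Rightarrow> 'k::field ncpoly set" where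
  "lcs n 0 = freeLie n"
| "lcs n (Suc k) = brset (lcs n k) (freeLie n)"

text \<open>Lower central series: gammaL n 1 = L_n, gammaL n (k+1) = [gammaL n k, L_n].\<close>
definition gammaL :: "nat \<Rightarrow> nat \<Rightarrow> 'k::field ncpoly set" where
  "gammaL n k = lcs n (k - 1)"

definition derived2 :: "nat \<Rightarrow> 'k::field ncpoly set" where
  "derived2 n = brset (gammaL n 2) (gammaL n 2)"

definition idealI :: "nat \<Rightarrow> nat \<Rightarrow> 'k::field ncpoly set" where
  "idealI n c = {ncadd a b | a b. a \<in> derived2 n \<and> b \<in> gammaL n (c + 1)}"

definition relI :: "nat \<Rightarrow> nat \<Rightarrow> ('k::field ncpoly \<times> 'k ncpoly) set" where
  "relI n c = {(p, q). p \<in> freeLie n \<and> q \<in> freeLie n \<and> ncsub p q \<in> idealI n c}"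

text \<open>L_(n,c) = L_n / (L_n'' + gamma^(c+1)(L_n)), elements are cosets.\<close>
definition Lnc :: "nat \<Rightarrow> nat \<Rightarrow> 'k::field ncpoly set set" where
  "Lnc n c = freeLie n // relI n c"

definition cls :: "nat \<Rightarrow> nat \<Rightarrow> 'k::field ncpoly \<Rightarrow> 'k ncpoly set" where
  "cls n c p = relI n c `` {p}"

text \<open>Action of a permutation: p(x_1..x_n) maps to p(x_pi(1)..x_pi(n)).\<close>
definition perm_act :: "(nat \<Rightarrow> nat) \<Rightarrow> 'k::field ncpoly \<Rightarrow> 'k ncpoly" where
  "perm_act \<pi> p = (\<lambda>w. p (map (inv \<pi>) w))"

definition symLnc :: "nat \<Rightarrow> nat \<Rightarrow> 'k::field ncpoly set set" where
  "symLnc n c = {C \<in> Lnc n c. \<forall>\<pi>. \<pi> permutes {..<n} \<longrightarrow>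
      (\<forall>p \<in> C. cls n c (perm_act \<pi> p) = C)}"

definition gcLnc :: "nat \<Rightarrow> nat \<Rightarrow> 'k::field ncpoly set set" where
  "gcLnc n c = cls n c ` gammaL n c"

definition ad :: "'k::field ncpoly \<Rightarrow> 'k ncpoly \<Rightarrow> 'k ncpoly" where
  "ad u v = lbr v u"

definition eps_rep :: "nat \<Rightarrow> 'k::field ncpoly \<Rightarrow> 'k ncpoly \<Rightarrow> 'k ncpoly" where
  "eps_rep c u v = (\<lambda>w. \<Sum>k<c. (1 / of_nat (fact k)) * (((ad u) ^^ k) v) w)"

definition epsL :: "nat \<Rightarrow> nat \<Rightarrow> 'k::field ncpoly set \<Rightarrow> 'k ncpoly set \<Rightarrow> 'k ncpoly set" where
  "epsL n c U = (\<lambda>C \<in> Lnc n c. cls n c (eps_rep c (SOME u. u \<in> U) (SOME p. p \<in> C)))"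

definition idL :: "nat \<Rightarrow> nat \<Rightarrow> 'k::field ncpoly set \<Rightarrow> 'k ncpoly set" where
  "idL n c = (\<lambda>C \<in> Lnc n c. C)"

definition Inn_sym :: "nat \<Rightarrow> nat \<Rightarrow> ('k::field ncpoly set \<Rightarrow> 'k ncpoly set) set" where
  "Inn_sym n c = {epsL n c U | U. U \<in> Lnc n c \<and>
      (\<forall>C \<in> symLnc n c. epsL n c U C \<in> symLnc n c)}"

end

theory Submission
  imports Defs "HOL-Library.Function_Algebras" "HOL-Combinatorics.Multiset_Permutations"
begin

text \<open>If \<open>\<epsilon>\<^sub>u\<close> preserves symmetric elements, it maps the symmetric element
  \<open>s = x\<^sub>1 + \<dots> + x\<^sub>n\<close> to a symmetric one, so \<open>\<epsilon>\<^sub>\<pi>\<^sub>u(s) = \<pi>(\<epsilon>\<^sub>u(s)) = \<epsilon>\<^sub>u(s)\<close> for every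
  permutation \<open>\<pi>\<close>. The leading term of \<open>\<epsilon>\<^sub>u\<^sub>+\<^sub>g(s) - \<epsilon>\<^sub>u(s)\<close> is \<open>[s, g]\<close>, and bracketing
  with \<open>s\<close> is injective on the homogeneous components of degree at least two (as seen with
  coefficient functionals dual to the metabelian basis); in degree one, the \<open>S\<^sub>n\<close>-invariant
  sum of the linear coefficients takes its place. Induction on the degree gives
  \<open>\<pi>u \<equiv> u\<close> modulo \<open>\<gamma>\<^sup>c\<close> for all \<open>\<pi>\<close>. Since \<open>\<epsilon>\<^sub>u\<close> only depends on \<open>u\<close> modulo \<open>\<gamma>\<^sup>c\<close>, \<open>u\<close>
  may be replaced by its symmetrization \<open>(1/n!) \<Sum>\<^sub>\<pi> \<pi>u\<close>, and \<open>\<epsilon>\<^sub>u = 1\<close> if that lies in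
  \<open>\<gamma>\<^sup>c\<close>. Conversely, for symmetric \<open>u\<close> the map \<open>\<epsilon>\<^sub>u\<close> commutes with the action of \<open>S\<^sub>n\<close>.\<close>

section \<open>Noncommutative polynomials\<close>

lemma nczero_eq: "nczero = 0"
  by (simp add: nczero_def fun_eq_iff)

lemma ncadd_eq: "ncadd p q = p + q"
  by (simp add: ncadd_def fun_eq_iff)

lemma ncsub_eq: "ncsub p q = p - q"
  by (simp add: ncsub_def fun_eq_iff)

lemma sum_fun_apply: "(\<Sum>i\<in>A. f i) w = (\<Sum>i\<in>A. f i w)"
  by (induction A rule: infinite_finite_induct) simp_all

lemma ncsmul_apply [simp]: "ncsmul a p w = a * p w"
  by (simp add: ncsmul_def)

lemma ncsmul_zero_left [simp]: "ncsmul 0 p = 0"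
  by (simp add: fun_eq_iff)

lemma ncsmul_zero_right [simp]: "ncsmul a 0 = 0"
  by (simp add: fun_eq_iff)

lemma ncsmul_one [simp]: "ncsmul 1 p = p"
  by (simp add: fun_eq_iff)

lemma ncsmul_ncsmul: "ncsmul a (ncsmul b p) = ncsmul (a * b) p"
  by (simp add: fun_eq_iff)

lemma ncsmul_add_left: "ncsmul (a + b) p = ncsmul a p + ncsmul b p"
  by (simp add: fun_eq_iff distrib_right)

lemma ncsmul_add_right: "ncsmul a (p + q) = ncsmul a p + ncsmul a q"
  by (simp add: fun_eq_iff distrib_left)

lemma ncsmul_diff_right: "ncsmul a (p - q) = ncsmul a p - ncsmul a q"
  by (simp add: fun_eq_iff right_diff_distrib)

lemma ncsmul_sum_right: "ncsmul a (\<Sum>i\<in>A. f i) = (\<Sum>i\<in>A. ncsmul a (f i))"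
  by (simp add: fun_eq_iff sum_fun_apply sum_distrib_left)

lemma ncmul_add_left: "ncmul (p + q) r = ncmul p r + ncmul q r"
  by (simp add: ncmul_def fun_eq_iff distrib_right sum.distrib)

lemma ncmul_add_right: "ncmul r (p + q) = ncmul r p + ncmul r q"
  by (simp add: ncmul_def fun_eq_iff distrib_left sum.distrib)

lemma ncmul_diff_left: "ncmul (p - q) r = ncmul p r - ncmul q r"
  by (simp add: ncmul_def fun_eq_iff left_diff_distrib sum_subtractf)

lemma ncmul_diff_right: "ncmul r (p - q) = ncmul r p - ncmul r q"
  by (simp add: ncmul_def fun_eq_iff right_diff_distrib sum_subtractf)

lemma ncmul_ncsmul_left: "ncmul (ncsmul a p) r = ncsmul a (ncmul p r)"
  by (simp add: ncmul_def fun_eq_iff sum_distrib_left mult.assoc)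

lemma ncmul_ncsmul_right: "ncmul r (ncsmul a p) = ncsmul a (ncmul r p)"
  by (simp add: ncmul_def fun_eq_iff sum_distrib_left mult.assoc mult.left_commute)

lemma ncmul_zero_left [simp]: "ncmul 0 r = 0"
  by (simp add: ncmul_def fun_eq_iff)

lemma ncmul_zero_right [simp]: "ncmul r 0 = 0"
  by (simp add: ncmul_def fun_eq_iff)

lemma ncmul_assoc: "ncmul (ncmul p q) r = ncmul p (ncmul q r)"
proof (rule ext)
  fix w :: "nat list"
  define N where "N = length w"
  define g where "g = (\<lambda>i j. p (take i w) * q (take j (drop i w)) * r (drop (i + j) w))"
  have "ncmul (ncmul p q) r w = (\<Sum>k\<le>N. \<Sum>i\<le>k. g i (k - i))"
    unfolding ncmul_def g_def N_def
    by (intro sum.cong refl) (auto simp: sum_distrib_right min_def take_drop intro!: sum.cong)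
  also have "\<dots> = (\<Sum>(i, j)\<in>{(i, j). i + j \<le> N}. g i j)"
    by (rule sum.triangle_reindex_eq[symmetric])
  also have "\<dots> = (\<Sum>i\<le>N. \<Sum>j\<le>N - i. g i j)"
    by (subst sum.Sigma) (auto intro!: sum.reindex_bij_witness[where i = id and j = id])
  also have "\<dots> = ncmul p (ncmul q r) w"
    unfolding ncmul_def g_def N_def
    by (intro sum.cong refl) (auto simp: sum_distrib_left mult.assoc add.commute)
  finally show "ncmul (ncmul p q) r w = ncmul p (ncmul q r) w" .
qed

lemma lbr_eq: "lbr p q = ncmul p q - ncmul q p"
  by (simp add: lbr_def ncsub_eq)

lemma lbr_add_left: "lbr (p + q) r = lbr p r + lbr q r"
  by (simp add: lbr_eq ncmul_add_left ncmul_add_right)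

lemma lbr_add_right: "lbr r (p + q) = lbr r p + lbr r q"
  by (simp add: lbr_eq ncmul_add_left ncmul_add_right)

lemma lbr_diff_left: "lbr (p - q) r = lbr p r - lbr q r"
  by (simp add: lbr_eq ncmul_diff_left ncmul_diff_right)

lemma lbr_diff_right: "lbr r (p - q) = lbr r p - lbr r q"
  by (simp add: lbr_eq ncmul_diff_left ncmul_diff_right)

lemma lbr_ncsmul_left: "lbr (ncsmul a p) r = ncsmul a (lbr p r)"
  by (simp add: lbr_eq ncmul_ncsmul_left ncmul_ncsmul_right ncsmul_diff_right)

lemma lbr_ncsmul_right: "lbr r (ncsmul a p) = ncsmul a (lbr r p)"
  by (simp add: lbr_eq ncmul_ncsmul_left ncmul_ncsmul_right ncsmul_diff_right)

lemma lbr_zero_left [simp]: "lbr 0 r = 0"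
  by (simp add: lbr_eq)

lemma lbr_zero_right [simp]: "lbr r 0 = 0"
  by (simp add: lbr_eq)

lemma lbr_self [simp]: "lbr p p = 0"
  by (simp add: lbr_eq)

lemma lbr_antisym: "lbr p q = - lbr q p"
  by (simp add: lbr_eq)

lemma lbr_sum_left: "lbr (\<Sum>i\<in>A. f i) r = (\<Sum>i\<in>A. lbr (f i) r)"
  by (induction A rule: infinite_finite_induct)
    (simp_all only: sum.infinite sum.empty sum.insert not_False_eq_True lbr_zero_left lbr_add_left)

lemma lbr_sum_right: "lbr r (\<Sum>i\<in>A. f i) = (\<Sum>i\<in>A. lbr r (f i))"
  by (induction A rule: infinite_finite_induct)
    (simp_all only: sum.infinite sum.empty sum.insert not_False_eq_True lbr_zero_right lbr_add_right)

lemma lbr_jacobi: "lbr (lbr a b) c = lbr (lbr a c) b + lbr a (lbr b c)"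
  by (simp add: lbr_eq ncmul_diff_left ncmul_diff_right ncmul_assoc algebra_simps)

section \<open>Subspaces, brackets of subspaces and the lower central series\<close>

definition ncsubspace :: "'k::field ncpoly set \<Rightarrow> bool" where
  "ncsubspace S \<longleftrightarrow> 0 \<in> S \<and> (\<forall>p\<in>S. \<forall>q\<in>S. p + q \<in> S) \<and> (\<forall>a. \<forall>p\<in>S. ncsmul a p \<in> S)"

lemma ncsubspace_zero: "ncsubspace S \<Longrightarrow> 0 \<in> S"
  by (simp add: ncsubspace_def)

lemma ncsubspace_add: "ncsubspace S \<Longrightarrow> p \<in> S \<Longrightarrow> q \<in> S \<Longrightarrow> p + q \<in> S"
  by (simp add: ncsubspace_def)

lemma ncsubspace_ncsmul: "ncsubspace S \<Longrightarrow> p \<in> S \<Longrightarrow> ncsmul a p \<in> S"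
  by (simp add: ncsubspace_def)

lemma ncsmul_minus_one: "ncsmul (- 1) p = - p"
  by (simp add: fun_eq_iff)

lemma ncsubspace_uminus: "ncsubspace S \<Longrightarrow> p \<in> S \<Longrightarrow> - p \<in> S"
  by (metis ncsubspace_ncsmul ncsmul_minus_one)

lemma ncsubspace_diff: "ncsubspace S \<Longrightarrow> p \<in> S \<Longrightarrow> q \<in> S \<Longrightarrow> p - q \<in> S"
  using ncsubspace_add[of S p "- q"] ncsubspace_uminus[of S q] by simp

lemma ncsubspace_sum: "ncsubspace S \<Longrightarrow> (\<And>i. i \<in> A \<Longrightarrow> f i \<in> S) \<Longrightarrow> (\<Sum>i\<in>A. f i) \<in> S"
  by (induction A rule: infinite_finite_induct) (auto intro: ncsubspace_zero ncsubspace_add)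

lemma ncsubspace_diff_commute: "ncsubspace S \<Longrightarrow> p - q \<in> S \<Longrightarrow> q - p \<in> S"
  using ncsubspace_uminus[of S "p - q"] by simp

lemma ncsubspace_diff_trans: "ncsubspace S \<Longrightarrow> p - q \<in> S \<Longrightarrow> q - r \<in> S \<Longrightarrow> p - r \<in> S"
  using ncsubspace_add[of S "p - q" "q - r"] by simp

lemma ncsubspace_set_plus:
  assumes "ncsubspace A" "ncsubspace B"
  shows "ncsubspace {a + b | a b. a \<in> A \<and> b \<in> B}"
  unfolding ncsubspace_def
proof (intro conjI ballI allI)
  show "0 \<in> {a + b | a b. a \<in> A \<and> b \<in> B}"
    using assms by (auto intro!: exI[of _ 0] ncsubspace_zero)
next
  fix p q assume "p \<in> {a + b | a b. a \<in> A \<and> b \<in> B}" "q \<in> {a + b | a b. a \<in> A \<and> b \<in> B}"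
  then obtain a b a' b' where "p = a + b" "q = a' + b'" "a \<in> A" "b \<in> B" "a' \<in> A" "b' \<in> B"
    by blast
  moreover have "a + b + (a' + b') = (a + a') + (b + b')"
    by (simp add: algebra_simps)
  ultimately show "p + q \<in> {a + b | a b. a \<in> A \<and> b \<in> B}"
    using assms by (blast intro: ncsubspace_add)
next
  fix p x assume "p \<in> {a + b | a b. a \<in> A \<and> b \<in> B}"
  then obtain a b where "p = a + b" "a \<in> A" "b \<in> B"
    by blast
  then show "ncsmul x p \<in> {a + b | a b. a \<in> A \<and> b \<in> B}"
    using assms ncsmul_add_right[of x a b] by (blast intro: ncsubspace_ncsmul)
qed

lemma ncsubspace_freeLie: "ncsubspace (freeLie n)"
  unfolding ncsubspace_def using freeLie.zero freeLie.add freeLie.smul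
  by (auto simp: nczero_eq ncadd_eq)

lemma zero_in_freeLie: "0 \<in> freeLie n"
  by (rule ncsubspace_zero[OF ncsubspace_freeLie])

lemma ncsubspace_lspan: "ncsubspace (lspan S)"
  unfolding ncsubspace_def using lspan.zero lspan.add lspan.smul
  by (auto simp: nczero_eq ncadd_eq)

lemma lspan_linear_image:
  assumes "p \<in> lspan S" "ncsubspace T" "\<And>s. s \<in> S \<Longrightarrow> f s \<in> T"
    and "f 0 = 0" "\<And>p q. f (p + q) = f p + f q" "\<And>a p. f (ncsmul a p) = ncsmul a (f p)"
  shows "f p \<in> T"
  using assms(1)
proof (induction rule: lspan.induct)
  case zero
  then show ?case using assms(2,4) ncsubspace_zero by (metis nczero_eq)
next
  case (add p q)
  then show ?case using assms(2,5) ncsubspace_add by (metis ncadd_eq)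
next
  case (smul p a)
  then show ?case using assms(2,6) by (metis ncsubspace_ncsmul)
qed (use assms(3) in simp)

lemma lspan_least:
  assumes "S \<subseteq> T" "ncsubspace T"
  shows "lspan S \<subseteq> T"
proof
  fix p assume "p \<in> lspan S"
  then show "p \<in> T"
    using lspan_linear_image[where f = id, OF _ assms(2)] assms(1) by auto
qed

lemma lspan_mono: "S \<subseteq> T \<Longrightarrow> lspan S \<subseteq> lspan T"
  using lspan_least[of S "lspan T"] lspan.base ncsubspace_lspan by blast

lemma ncsubspace_brset: "ncsubspace (brset A B)"
  by (simp add: brset_def ncsubspace_lspan)

lemma lbr_in_brset: "a \<in> A \<Longrightarrow> b \<in> B \<Longrightarrow> lbr a b \<in> brset A B"
  unfolding brset_def by (rule lspan.base) blast

lemma brset_least: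
  "(\<And>a b. a \<in> A \<Longrightarrow> b \<in> B \<Longrightarrow> lbr a b \<in> T) \<Longrightarrow> ncsubspace T \<Longrightarrow> brset A B \<subseteq> T"
  unfolding brset_def by (rule lspan_least) auto

lemma brset_mono: "A \<subseteq> A' \<Longrightarrow> B \<subseteq> B' \<Longrightarrow> brset A B \<subseteq> brset A' B'"
  unfolding brset_def by (rule lspan_mono) blast

lemma lbr_brset_left:
  assumes "p \<in> brset A B" "ncsubspace T" "\<And>a b. a \<in> A \<Longrightarrow> b \<in> B \<Longrightarrow> lbr (lbr a b) x \<in> T"
  shows "lbr p x \<in> T"
  using assms(1) unfolding brset_def
  by (rule lspan_linear_image[where f = "\<lambda>p. lbr p x", OF _ assms(2)])
     (use assms(3) in \<open>auto simp: lbr_add_left lbr_ncsmul_left\<close>)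

text \<open>Off by one: \<^term>\<open>lcs n k\<close> is \<open>\<gamma>\<^sup>k\<^sup>+\<^sup>1(L\<^sub>n)\<close>; its elements have no words of
  length at most \<open>k\<close>.\<close>

lemma lcs_subset_freeLie: "lcs n k \<subseteq> freeLie n"
proof (induction k)
  case (Suc k)
  then show ?case
    using brset_least[OF _ ncsubspace_freeLie, of "lcs n k" "freeLie n" n] freeLie.br by auto
qed simp

lemma ncsubspace_lcs: "ncsubspace (lcs n k)"
  by (cases k) (simp_all add: ncsubspace_freeLie ncsubspace_brset)

lemma lcs_Suc_subset: "(lcs n (Suc k) :: 'k::field ncpoly set) \<subseteq> lcs n k"
proof (induction k)
  case 0
  then show ?case using lcs_subset_freeLie[of n "Suc 0"] by simp
next
  case (Suc k)
  have "brset (lcs n (Suc k)) (freeLie n) \<subseteq> brset (lcs n k :: 'k ncpoly set) (freeLie n)"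
    by (rule brset_mono[OF Suc.IH order_refl])
  then show ?case by (simp only: lcs.simps(2))
qed

lemma lcs_antimono: "k \<le> m \<Longrightarrow> lcs n m \<subseteq> lcs n k"
proof (induction m rule: dec_induct)
  case (step m)
  then show ?case using lcs_Suc_subset[of n m] by blast
qed simp

lemma lbr_lcs: "p \<in> lcs n k \<Longrightarrow> x \<in> freeLie n \<Longrightarrow> lbr p x \<in> lcs n (Suc k)"
  by (simp add: lbr_in_brset)

lemma lbr_lcs': "x \<in> freeLie n \<Longrightarrow> p \<in> lcs n k \<Longrightarrow> lbr x p \<in> lcs n (Suc k)"
  using lbr_lcs[of p n k x] ncsubspace_uminus[OF ncsubspace_lcs] by (subst lbr_antisym) blast

lemma lbr_lcs1_lcs:
  fixes p q :: "'k::field ncpoly"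
  assumes "p \<in> lcs n 1" "q \<in> lcs n m"
  shows "lbr p q \<in> lcs n (m + 2)"
proof -
  have p: "p \<in> brset (freeLie n) (freeLie n)"
    using assms by simp
  show ?thesis
  proof (rule lbr_brset_left[OF p ncsubspace_lcs])
    fix a b :: "'k ncpoly" assume a: "a \<in> freeLie n" and b: "b \<in> freeLie n"
    have "lbr (lbr a q) b \<in> lcs n (m + 2)"
      using lbr_lcs[OF lbr_lcs'[OF a assms(2)] b] by simp
    moreover have "lbr a (lbr b q) \<in> lcs n (m + 2)"
      using lbr_lcs'[OF a lbr_lcs'[OF b assms(2)]] by simp
    ultimately show "lbr (lbr a b) q \<in> lcs n (m + 2)"
      unfolding lbr_jacobi[of a b q] by (rule ncsubspace_add[OF ncsubspace_lcs])
  qed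
qed

lemma lbr_lcs_lcs1:
  assumes "p \<in> lcs n 1" "q \<in> lcs n m"
  shows "lbr q p \<in> lcs n (m + 2)"
  using lbr_lcs1_lcs[OF assms] ncsubspace_uminus[OF ncsubspace_lcs] by (subst lbr_antisym) blast

lemma lbr_var_lcs1: "M \<in> lcs n 1 \<Longrightarrow> x < n \<Longrightarrow> lbr M (ncvar x) \<in> lcs n 1"
  using lbr_lcs[of M n 1 "ncvar x"] lcs_Suc_subset[of n 1] freeLie.var by blast

lemma lbr_vars_lcs1: "a < n \<Longrightarrow> b < n \<Longrightarrow> lbr (ncvar a) (ncvar b) \<in> lcs n 1"
  by (simp add: lbr_in_brset freeLie.var)

lemma freeLie_Nil: "p \<in> freeLie n \<Longrightarrow> p [] = 0"
  by (induction rule: freeLie.induct)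
     (auto simp: nczero_def ncvar_def ncadd_def ncsmul_def lbr_def ncsub_def ncmul_def)

lemma lcs_short_word:
  assumes "(p :: 'k::field ncpoly) \<in> lcs n k" "length w \<le> k"
  shows "p w = 0"
  using assms
proof (induction k arbitrary: p w)
  case 0
  then show ?case using freeLie_Nil by auto
next
  case (Suc k)
  let ?T = "{p::'k ncpoly. \<forall>w. length w \<le> Suc k \<longrightarrow> p w = 0}"
  have "brset (lcs n k) (freeLie n) \<subseteq> ?T"
  proof (rule brset_least)
    fix a b :: "'k ncpoly" assume a: "a \<in> lcs n k" and b: "b \<in> freeLie n"
    have a_short: "length w \<le> k \<Longrightarrow> a w = 0" for w
      using Suc.IH a by blast
    have b_Nil: "b [] = 0"
      using b freeLie_Nil by auto
    have "ncmul a b w = 0" if "length w \<le> Suc k" for w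
      unfolding ncmul_def
    proof (intro sum.neutral ballI)
      fix i assume "i \<in> {..length w}"
      then show "a (take i w) * b (drop i w) = 0"
        using that a_short[of "take i w"] b_Nil by (cases "i = length w") auto
    qed
    moreover have "ncmul b a w = 0" if "length w \<le> Suc k" for w
      unfolding ncmul_def
    proof (intro sum.neutral ballI)
      fix i assume "i \<in> {..length w}"
      then show "b (take i w) * a (drop i w) = 0"
        using that a_short[of "drop i w"] b_Nil by (cases "i = 0") auto
    qed
    ultimately show "lbr a b \<in> ?T"
      by (simp add: lbr_eq)
  qed (auto simp: ncsubspace_def)
  then show ?case using Suc.prems by auto
qed

section \<open>The ideal \<open>L\<^sub>n'' + \<gamma>\<^sup>c\<^sup>+\<^sup>1(L\<^sub>n)\<close>\<close>

lemma derived2_eq: "derived2 n = brset (lcs n 1) (lcs n 1)"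
  by (simp add: derived2_def gammaL_def)

lemma ncsubspace_derived2: "ncsubspace (derived2 n)"
  by (simp add: derived2_def ncsubspace_brset)

lemma lbr_lcs1_in_derived2: "a \<in> lcs n 1 \<Longrightarrow> b \<in> lcs n 1 \<Longrightarrow> lbr a b \<in> derived2 n"
  unfolding derived2_eq by (rule lbr_in_brset)

lemma derived2_subset_lcs3: "(derived2 n :: 'k::field ncpoly set) \<subseteq> lcs n 3"
  unfolding derived2_eq
proof (rule brset_least[OF _ ncsubspace_lcs])
  fix a b :: "'k ncpoly" assume "a \<in> lcs n 1" "b \<in> lcs n 1"
  then show "lbr a b \<in> lcs n 3"
    using lbr_lcs1_lcs[of a n b 1] by (simp add: numeral_3_eq_3)
qed

lemma lbr_derived2:
  fixes d x :: "'k::field ncpoly"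
  assumes "d \<in> derived2 n" "x \<in> freeLie n"
  shows "lbr d x \<in> derived2 n"
proof (rule lbr_brset_left[OF assms(1)[unfolded derived2_eq] ncsubspace_derived2])
  fix a b :: "'k ncpoly" assume a: "a \<in> lcs n 1" and b: "b \<in> lcs n 1"
  have "lbr a x \<in> lcs n 1" "lbr b x \<in> lcs n 1"
    using lbr_lcs[OF a assms(2)] lbr_lcs[OF b assms(2)] lcs_Suc_subset[of n 1] by auto
  then have "lbr (lbr a x) b \<in> derived2 n" "lbr a (lbr b x) \<in> derived2 n"
    using a b by (auto intro: lbr_lcs1_in_derived2)
  then show "lbr (lbr a b) x \<in> derived2 n"
    unfolding lbr_jacobi[of a b x] by (intro ncsubspace_add[OF ncsubspace_derived2])
qed

lemma idealI_eq:
  "(idealI n c :: 'k::field ncpoly set) = {a + b | a b. a \<in> derived2 n \<and> b \<in> (lcs n c :: 'k ncpoly set)}"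
  by (simp add: idealI_def gammaL_def ncadd_eq)

lemma ncsubspace_idealI: "ncsubspace (idealI n c)"
  unfolding idealI_eq by (intro ncsubspace_set_plus ncsubspace_derived2 ncsubspace_lcs)

lemma derived2_in_idealI:
  assumes "(x :: 'k::field ncpoly) \<in> derived2 n"
  shows "x \<in> idealI n c"
proof -
  have "x = x + 0" by simp
  then show ?thesis
    unfolding idealI_eq using assms ncsubspace_zero[OF ncsubspace_lcs, of n c] by blast
qed

lemma lcs_in_idealI:
  assumes "(x :: 'k::field ncpoly) \<in> lcs n c"
  shows "x \<in> idealI n c"
proof -
  have "x = 0 + x" by simp
  then show ?thesis
    unfolding idealI_eq using assms ncsubspace_zero[OF ncsubspace_derived2, of n] by blast
qed

lemma idealI_subset_lcs: "k \<le> 3 \<Longrightarrow> k \<le> c \<Longrightarrow> (idealI n c :: 'k::field ncpoly set) \<subseteq> lcs n k"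
  unfolding idealI_eq
  using derived2_subset_lcs3 lcs_antimono[of k 3 n] lcs_antimono[of k c n] ncsubspace_add[OF ncsubspace_lcs]
  by blast

lemma lbr_idealI_Suc:
  fixes r x :: "'k::field ncpoly"
  assumes "r \<in> idealI n k" "x \<in> freeLie n"
  shows "lbr r x \<in> idealI n (Suc k)"
proof -
  obtain a b where ab: "r = a + b" "a \<in> derived2 n" "b \<in> lcs n k"
    using assms(1) unfolding idealI_eq by blast
  have "lbr a x \<in> idealI n (Suc k)"
    by (rule derived2_in_idealI[OF lbr_derived2[OF ab(2) assms(2)]])
  moreover have "lbr b x \<in> idealI n (Suc k)"
    by (rule lcs_in_idealI[OF lbr_lcs[OF ab(3) assms(2)]])
  ultimately show ?thesis
    unfolding ab lbr_add_left by (rule ncsubspace_add[OF ncsubspace_idealI])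
qed

lemma idealI_Suc_subset: "(idealI n (Suc c) :: 'k::field ncpoly set) \<subseteq> idealI n c"
  unfolding idealI_eq using lcs_Suc_subset by blast

lemma lbr_idealI: "r \<in> idealI n c \<Longrightarrow> x \<in> freeLie n \<Longrightarrow> lbr r x \<in> idealI n c"
  using lbr_idealI_Suc idealI_Suc_subset by blast

lemma lbr_idealI':
  assumes "r \<in> idealI n c" "x \<in> freeLie n"
  shows "lbr x r \<in> idealI n c"
  using ncsubspace_uminus[OF ncsubspace_idealI lbr_idealI[OF assms]] by (subst lbr_antisym) simp

section \<open>The action of the symmetric group\<close>

lemma perm_act_add: "perm_act \<pi> (p + q) = perm_act \<pi> p + perm_act \<pi> q"
  by (simp add: perm_act_def fun_eq_iff)

lemma perm_act_diff: "perm_act \<pi> (p - q) = perm_act \<pi> p - perm_act \<pi> q"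
  by (simp add: perm_act_def fun_eq_iff)

lemma perm_act_zero [simp]: "perm_act \<pi> 0 = 0"
  by (simp add: perm_act_def fun_eq_iff)

lemma perm_act_ncsmul: "perm_act \<pi> (ncsmul a p) = ncsmul a (perm_act \<pi> p)"
  by (simp add: perm_act_def fun_eq_iff)

lemma perm_act_sum: "perm_act \<pi> (\<Sum>i\<in>A. f i) = (\<Sum>i\<in>A. perm_act \<pi> (f i))"
  by (induction A rule: infinite_finite_induct)
    (simp_all only: sum.infinite sum.empty sum.insert not_False_eq_True perm_act_zero perm_act_add)

lemma perm_act_ncmul: "perm_act \<pi> (ncmul p q) = ncmul (perm_act \<pi> p) (perm_act \<pi> q)"
  by (simp add: perm_act_def ncmul_def fun_eq_iff take_map drop_map)

lemma perm_act_lbr: "perm_act \<pi> (lbr p q) = lbr (perm_act \<pi> p) (perm_act \<pi> q)"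
  by (simp add: lbr_eq perm_act_diff perm_act_ncmul)

lemma perm_act_ncvar:
  assumes "bij \<pi>"
  shows "perm_act \<pi> (ncvar i) = ncvar (\<pi> i)"
proof (rule ext)
  fix w :: "nat list"
  have "map (inv \<pi>) w = [i] \<longleftrightarrow> w = [\<pi> i]"
  proof (cases w)
    case (Cons x xs)
    have "inv \<pi> x = i \<longleftrightarrow> x = \<pi> i"
      by (metis assms bij_inv_eq_iff)
    then show ?thesis using Cons by auto
  qed simp
  then show "perm_act \<pi> (ncvar i) w = ncvar (\<pi> i) w"
    by (simp add: perm_act_def ncvar_def)
qed

lemma perm_act_perm_act:
  assumes "bij \<pi>" "bij \<sigma>"
  shows "perm_act \<sigma> (perm_act \<pi> p) = perm_act (\<sigma> \<circ> \<pi>) p"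
  using o_inv_distrib[OF assms(2,1)] unfolding perm_act_def by (simp only: map_map)

lemma perm_act_freeLie:
  assumes "\<pi> permutes {..<n}" "p \<in> freeLie n"
  shows "perm_act \<pi> p \<in> freeLie n"
  using assms(2)
proof (induction rule: freeLie.induct)
  case zero
  show ?case unfolding nczero_eq perm_act_zero by (rule zero_in_freeLie)
next
  case (var i)
  have "\<pi> i < n" using assms(1) var permutes_in_image by fastforce
  then show ?case using perm_act_ncvar[OF permutes_bij[OF assms(1)]] freeLie.var by metis
next
  case (add p q)
  then show ?case unfolding ncadd_eq perm_act_add by (intro ncsubspace_add[OF ncsubspace_freeLie])
next
  case (smul p a)
  then show ?case unfolding perm_act_ncsmul by (intro ncsubspace_ncsmul[OF ncsubspace_freeLie])
next
  case (br p q)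
  then show ?case unfolding perm_act_lbr by (intro freeLie.br)
qed

lemma perm_act_lspan:
  assumes "p \<in> lspan S" "ncsubspace T" "\<And>s. s \<in> S \<Longrightarrow> perm_act \<pi> s \<in> T"
  shows "perm_act \<pi> p \<in> T"
  by (rule lspan_linear_image[OF assms]) (simp_all only: perm_act_zero perm_act_add perm_act_ncsmul)

lemma perm_act_lcs:
  fixes p :: "'k::field ncpoly"
  assumes "\<pi> permutes {..<n}"
  shows "p \<in> lcs n k \<Longrightarrow> perm_act \<pi> p \<in> lcs n k"
proof (induction k arbitrary: p)
  case 0
  then show ?case using perm_act_freeLie[OF assms] by simp
next
  case (Suc k)
  then have "p \<in> lspan {lbr a b |a b. a \<in> lcs n k \<and> b \<in> freeLie n}"
    by (simp add: brset_def)
  then show ?case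
  proof (rule perm_act_lspan[OF _ ncsubspace_lcs])
    fix s :: "'k ncpoly" assume "s \<in> {lbr a b |a b. a \<in> lcs n k \<and> b \<in> freeLie n}"
    then obtain a b where s: "s = lbr a b" and "a \<in> lcs n k" "b \<in> freeLie n"
      by blast
    then show "perm_act \<pi> s \<in> lcs n (Suc k)"
      unfolding s perm_act_lbr by (intro lbr_lcs Suc.IH perm_act_freeLie[OF assms])
  qed
qed

lemma perm_act_derived2:
  fixes p :: "'k::field ncpoly"
  assumes "\<pi> permutes {..<n}" "p \<in> derived2 n"
  shows "perm_act \<pi> p \<in> derived2 n"
  using assms(2) unfolding derived2_eq brset_def
proof (rule perm_act_lspan[OF _ ncsubspace_lspan])
  fix s :: "'k ncpoly" assume "s \<in> {lbr a b |a b. a \<in> lcs n 1 \<and> b \<in> lcs n 1}"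
  then obtain a b where s: "s = lbr a b" and "a \<in> lcs n 1" "b \<in> lcs n 1"
    by blast
  then show "perm_act \<pi> s \<in> lspan {lbr a b |a b. a \<in> lcs n 1 \<and> b \<in> lcs n 1}"
    unfolding s perm_act_lbr using perm_act_lcs[OF assms(1)] by (intro lspan.base) blast
qed

lemma perm_act_idealI:
  assumes "\<pi> permutes {..<n}" "p \<in> idealI n c"
  shows "perm_act \<pi> p \<in> idealI n c"
proof -
  obtain a b where ab: "p = a + b" "a \<in> derived2 n" "b \<in> lcs n c"
    using assms(2) unfolding idealI_eq by blast
  then show ?thesis
    unfolding ab(1) perm_act_add idealI_eq
    using perm_act_derived2[OF assms(1) ab(2)] perm_act_lcs[OF assms(1) ab(3)] by blast
qed

section \<open>The quotient \<open>L\<^sub>n\<^sub>,\<^sub>c\<close> and its symmetric elements\<close>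

lemma relI_iff: "(p, q) \<in> relI n c \<longleftrightarrow> p \<in> freeLie n \<and> q \<in> freeLie n \<and> p - q \<in> idealI n c"
  by (simp add: relI_def ncsub_eq)

lemma equiv_relI: "equiv (freeLie n) (relI n c)"
proof (rule equivI)
  show "refl_on (freeLie n) (relI n c)"
    by (auto simp: refl_on_def relI_iff ncsubspace_zero[OF ncsubspace_idealI])
  show "sym (relI n c)"
    by (auto simp: sym_def relI_iff intro: ncsubspace_diff_commute[OF ncsubspace_idealI])
  show "trans (relI n c)"
    by (auto simp: trans_def relI_iff intro: ncsubspace_diff_trans[OF ncsubspace_idealI])
qed (auto simp: relI_iff)

lemma in_cls_iff: "q \<in> cls n c p \<longleftrightarrow> p \<in> freeLie n \<and> q \<in> freeLie n \<and> p - q \<in> idealI n c"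
  by (simp add: cls_def relI_iff)

lemma cls_in_Lnc: "p \<in> freeLie n \<Longrightarrow> cls n c p \<in> Lnc n c"
  by (simp add: Lnc_def cls_def quotientI)

lemma LncE: "C \<in> Lnc n c \<Longrightarrow> (\<And>p. p \<in> freeLie n \<Longrightarrow> C = cls n c p \<Longrightarrow> P) \<Longrightarrow> P"
  by (auto simp: Lnc_def cls_def elim!: quotientE)

lemma self_in_cls: "p \<in> freeLie n \<Longrightarrow> p \<in> cls n c p"
  unfolding cls_def by (rule equiv_class_self[OF equiv_relI])

lemma cls_eq_iff:
  assumes "p \<in> freeLie n" "q \<in> freeLie n"
  shows "cls n c p = cls n c q \<longleftrightarrow> p - q \<in> idealI n c"
  using eq_equiv_class_iff[OF equiv_relI assms] assms by (simp add: cls_def relI_iff)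

lemma cls_eqI: "q \<in> cls n c p \<Longrightarrow> cls n c q = cls n c p"
  using cls_eq_iff[of q n p c] in_cls_iff[of q n c p] ncsubspace_diff_commute[OF ncsubspace_idealI]
  by blast

lemma Lnc_some_mem: "C \<in> Lnc n c \<Longrightarrow> (SOME p. p \<in> C) \<in> C"
  by (erule LncE) (metis self_in_cls someI_ex)

lemma Lnc_eq_cls: "C \<in> Lnc n c \<Longrightarrow> p \<in> C \<Longrightarrow> C = cls n c p"
  by (metis LncE cls_eqI)

lemma Lnc_subset_freeLie: "C \<in> Lnc n c \<Longrightarrow> C \<subseteq> freeLie n"
  by (erule LncE) (auto simp: in_cls_iff)

lemma symLnc_imp_Lnc: "U \<in> symLnc n c \<Longrightarrow> U \<in> Lnc n c"
  by (simp add: symLnc_def)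

lemma cls_in_symLnc_iff:
  assumes p: "p \<in> freeLie n"
  shows "cls n c p \<in> symLnc n c \<longleftrightarrow> (\<forall>\<pi>. \<pi> permutes {..<n} \<longrightarrow> perm_act \<pi> p - p \<in> idealI n c)"
proof
  assume "cls n c p \<in> symLnc n c"
  then have "\<forall>\<pi>. \<pi> permutes {..<n} \<longrightarrow> cls n c (perm_act \<pi> p) = cls n c p"
    using self_in_cls[OF p] by (auto simp: symLnc_def)
  then show "\<forall>\<pi>. \<pi> permutes {..<n} \<longrightarrow> perm_act \<pi> p - p \<in> idealI n c"
    using cls_eq_iff[OF perm_act_freeLie p] p by blast
next
  assume H: "\<forall>\<pi>. \<pi> permutes {..<n} \<longrightarrow> perm_act \<pi> p - p \<in> idealI n c"
  show "cls n c p \<in> symLnc n c"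
    unfolding symLnc_def
  proof (intro CollectI conjI allI impI ballI)
    show "cls n c p \<in> Lnc n c" by (rule cls_in_Lnc[OF p])
  next
    fix \<pi> q assume pi: "\<pi> permutes {..<n}" and q: "q \<in> cls n c p"
    then have qL: "q \<in> freeLie n" and pq: "p - q \<in> idealI n c"
      by (auto simp: in_cls_iff)
    have "perm_act \<pi> q - p = (perm_act \<pi> p - p) - perm_act \<pi> (p - q)"
      by (simp add: perm_act_diff)
    also have "\<dots> \<in> idealI n c"
      using H pi perm_act_idealI[OF pi pq] ncsubspace_diff[OF ncsubspace_idealI] by blast
    finally show "cls n c (perm_act \<pi> q) = cls n c p"
      using cls_eq_iff[OF perm_act_freeLie[OF pi qL] p] by blast
  qed
qed

lemma cls_in_symLnc_if_invariant:
  assumes "p \<in> freeLie n" "\<And>\<pi>. \<pi> permutes {..<n} \<Longrightarrow> perm_act \<pi> p = p"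
  shows "cls n c p \<in> symLnc n c"
  unfolding cls_in_symLnc_iff[OF assms(1)]
proof (intro allI impI)
  fix \<pi> assume "\<pi> permutes {..<n}"
  show "perm_act \<pi> p - p \<in> idealI n c"
    unfolding assms(2)[OF \<open>\<pi> permutes {..<n}\<close>] diff_self by (rule ncsubspace_zero[OF ncsubspace_idealI])
qed

lemma symLnc_perm_act_diff:
  assumes "U \<in> symLnc n c" "u \<in> U" "\<pi> permutes {..<n}"
  shows "perm_act \<pi> u - u \<in> idealI n c"
proof -
  have U: "U \<in> Lnc n c" by (rule symLnc_imp_Lnc[OF assms(1)])
  then have "u \<in> freeLie n" "U = cls n c u"
    using assms(2) Lnc_subset_freeLie Lnc_eq_cls by blast+
  then show ?thesis using cls_in_symLnc_iff assms by blast
qed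

section \<open>The inner automorphisms \<open>\<epsilon>\<^sub>u\<close>\<close>

lemma eps_rep_as_sum: "eps_rep c u v = (\<Sum>k<c. ncsmul (1 / of_nat (fact k)) ((ad u ^^ k) v))"
  by (simp add: eps_rep_def fun_eq_iff sum_fun_apply)

lemma ad_funpow_Suc: "(ad u ^^ Suc k) v = lbr ((ad u ^^ k) v) u"
  by (simp add: ad_def)

lemma ad_funpow_lcs:
  assumes "u \<in> freeLie n" "v \<in> lcs n m"
  shows "(ad u ^^ k) v \<in> lcs n (m + k)"
proof (induction k)
  case (Suc k)
  then show ?case unfolding ad_funpow_Suc using lbr_lcs[OF Suc.IH assms(1)] by simp
qed (use assms in simp)

lemma ad_funpow_freeLie:
  assumes "u \<in> freeLie n" "v \<in> freeLie n"
  shows "(ad u ^^ k) v \<in> freeLie n"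
  using ad_funpow_lcs[of u n v 0 k] assms lcs_subset_freeLie by auto

lemma ad_funpow_diff: "(ad u ^^ k) v - (ad u ^^ k) v' = (ad u ^^ k) (v - v')"
proof (induction k)
  case (Suc k)
  show ?case unfolding ad_funpow_Suc Suc.IH[symmetric] lbr_diff_left ..
qed simp

lemma eps_rep_freeLie:
  assumes "u \<in> freeLie n" "v \<in> freeLie n"
  shows "eps_rep c u v \<in> freeLie n"
  unfolding eps_rep_as_sum
  by (intro ncsubspace_sum[OF ncsubspace_freeLie] ncsubspace_ncsmul[OF ncsubspace_freeLie]
      ad_funpow_freeLie assms)

lemma eps_rep_zero: "c \<ge> 1 \<Longrightarrow> eps_rep c 0 v = v"
proof -
  assume c: "c \<ge> 1"
  have "(\<Sum>k<c. ncsmul (1 / of_nat (fact k)) ((ad 0 ^^ k) v))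
      = (\<Sum>k\<in>{0}. ncsmul (1 / of_nat (fact k)) ((ad 0 ^^ k) v))"
  proof (rule sum.mono_neutral_right)
    show "\<forall>i\<in>{..<c} - {0}. ncsmul (1 / of_nat (fact i)) ((ad 0 ^^ i) v) = 0"
    proof
      fix i assume "i \<in> {..<c} - {0}"
      then obtain j where "i = Suc j" by (cases i) auto
      then show "ncsmul (1 / of_nat (fact i)) ((ad 0 ^^ i) v) = 0"
        by (simp only: ad_funpow_Suc lbr_zero_right ncsmul_zero_right)
    qed
  qed (use c in auto)
  then show ?thesis unfolding eps_rep_as_sum by simp
qed

lemma perm_act_ad_funpow: "perm_act \<pi> ((ad u ^^ k) v) = (ad (perm_act \<pi> u) ^^ k) (perm_act \<pi> v)"
  by (induction k) (simp_all add: ad_funpow_Suc perm_act_lbr del: funpow.simps)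

lemma perm_act_eps_rep: "perm_act \<pi> (eps_rep c u v) = eps_rep c (perm_act \<pi> u) (perm_act \<pi> v)"
  unfolding eps_rep_as_sum perm_act_sum perm_act_ncsmul perm_act_ad_funpow ..

lemma eps_rep_diff:
  "eps_rep c u v - eps_rep c u' v'
     = (\<Sum>k<c. ncsmul (1 / of_nat (fact k)) ((ad u ^^ k) v - (ad u' ^^ k) v'))"
  unfolding eps_rep_as_sum by (simp add: sum_subtractf ncsmul_diff_right)

lemma eps_rep_cong_right:
  assumes "u \<in> freeLie n" "v - v' \<in> idealI n c"
  shows "eps_rep c u v - eps_rep c u v' \<in> idealI n c"
  unfolding eps_rep_diff
proof (intro ncsubspace_sum[OF ncsubspace_idealI] ncsubspace_ncsmul[OF ncsubspace_idealI])
  fix k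
  show "(ad u ^^ k) v - (ad u ^^ k) v' \<in> idealI n c"
    unfolding ad_funpow_diff
  proof (induction k)
    case 0
    show ?case using assms(2) by (simp only: funpow_0 id_apply)
  next
    case (Suc k)
    then show ?case unfolding ad_funpow_Suc by (rule lbr_idealI[OF _ assms(1)])
  qed
qed

text \<open>Perturbing \<open>u\<close> by \<open>g \<in> \<gamma>\<^sup>c\<close> changes each \<open>ad\<^sup>k u\<close> only by brackets with \<open>g\<close>, which
  lie in \<open>\<gamma>\<^sup>c\<^sup>+\<^sup>1\<close>; hence \<open>\<epsilon>\<^sub>u\<close> only depends on \<open>u\<close> modulo \<open>\<gamma>\<^sup>c(L\<^sub>n\<^sub>,\<^sub>c)\<close>.\<close>

lemma ad_funpow_cong_left:
  fixes u u' v g :: "'k::field ncpoly"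
  assumes "c \<ge> 1" "u \<in> freeLie n" "u' \<in> freeLie n" "v \<in> freeLie n"
    and "g \<in> lcs n (c - 1)" "u - u' - g \<in> idealI n c"
  shows "(ad u ^^ k) v - (ad u' ^^ k) v \<in> idealI n c"
proof (induction k)
  case 0
  show ?case
    unfolding funpow_0 id_apply diff_self by (rule ncsubspace_zero[OF ncsubspace_idealI])
next
  case (Suc k)
  let ?A = "(ad u ^^ k) v" and ?A' = "(ad u' ^^ k) v"
  have A': "?A' \<in> freeLie n" by (rule ad_funpow_freeLie[OF assms(3,4)])
  have eq: "(ad u ^^ Suc k) v - (ad u' ^^ Suc k) v
      = lbr (?A - ?A') u + (lbr ?A' (u - u' - g) + lbr ?A' g)"
    unfolding ad_funpow_Suc lbr_diff_left lbr_diff_right by (simp add: algebra_simps)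
  have "lbr (?A - ?A') u \<in> idealI n c"
    by (rule lbr_idealI[OF Suc.IH assms(2)])
  moreover have "lbr ?A' (u - u' - g) \<in> idealI n c"
    by (rule lbr_idealI'[OF assms(6) A'])
  moreover have "lbr ?A' g \<in> lcs n (Suc (c - 1))"
    by (rule lbr_lcs'[OF A' assms(5)])
  then have "lbr ?A' g \<in> idealI n c"
    using assms(1) lcs_in_idealI by (simp add: Suc_pred)
  ultimately show ?case
    unfolding eq by (intro ncsubspace_add[OF ncsubspace_idealI])
qed

lemma eps_rep_cong_left:
  fixes u u' v g :: "'k::field ncpoly"
  assumes "c \<ge> 1" "u \<in> freeLie n" "u' \<in> freeLie n" "v \<in> freeLie n"
    and "g \<in> lcs n (c - 1)" "u - u' - g \<in> idealI n c"
  shows "eps_rep c u v - eps_rep c u' v \<in> idealI n c"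
  unfolding eps_rep_diff
  by (intro ncsubspace_sum[OF ncsubspace_idealI] ncsubspace_ncsmul[OF ncsubspace_idealI]
      ad_funpow_cong_left[OF assms])

lemma eps_rep_idealI_cong_left:
  fixes u u' v :: "'k::field ncpoly"
  assumes "c \<ge> 1" "u \<in> freeLie n" "u' \<in> freeLie n" "v \<in> freeLie n" "u - u' \<in> idealI n c"
  shows "eps_rep c u v - eps_rep c u' v \<in> idealI n c"
  using eps_rep_cong_left[OF assms(1-4) ncsubspace_zero[OF ncsubspace_lcs]] assms(5) by simp

lemma epsL_eq:
  fixes u p :: "'k::field ncpoly"
  assumes c: "c \<ge> 1" and U: "U \<in> Lnc n c" and C: "C \<in> Lnc n c" and u: "u \<in> U" and p: "p \<in> C"
  shows "epsL n c U C = cls n c (eps_rep c u p)"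
proof -
  define u' where "u' = (SOME u. u \<in> U)"
  define p' where "p' = (SOME p. p \<in> C)"
  have u': "u' \<in> U" and p': "p' \<in> C"
    unfolding u'_def p'_def by (rule Lnc_some_mem[OF U], rule Lnc_some_mem[OF C])
  have uL: "u \<in> freeLie n" "u' \<in> freeLie n" and pL: "p \<in> freeLie n" "p' \<in> freeLie n"
    using u u' p p' Lnc_subset_freeLie[OF U] Lnc_subset_freeLie[OF C] by auto
  have "u' - u \<in> idealI n c" "p' - p \<in> idealI n c"
    using U C u u' p p' uL pL by (metis Lnc_eq_cls cls_eq_iff)+
  then have "eps_rep c u' p' - eps_rep c u' p \<in> idealI n c" "eps_rep c u' p - eps_rep c u p \<in> idealI n c"
    by (auto intro: eps_rep_cong_right[OF uL(2)] eps_rep_idealI_cong_left[OF c uL(2) uL(1) pL(1)])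
  then have "eps_rep c u' p' - eps_rep c u p \<in> idealI n c"
    by (rule ncsubspace_diff_trans[OF ncsubspace_idealI])
  then have "cls n c (eps_rep c u' p') = cls n c (eps_rep c u p)"
    using cls_eq_iff eps_rep_freeLie uL pL by blast
  then show ?thesis unfolding epsL_def using C u'_def p'_def by simp
qed

lemma epsL_cls_zero:
  assumes c: "c \<ge> 1"
  shows "epsL n c (cls n c 0) = (idL n c :: 'k::field ncpoly set \<Rightarrow> _)"
proof
  fix C :: "'k ncpoly set"
  show "epsL n c (cls n c 0) C = idL n c C"
  proof (cases "C \<in> Lnc n c")
    case True
    obtain p where p: "p \<in> C" using Lnc_some_mem[OF True] by blast
    have "epsL n c (cls n c 0) C = cls n c (eps_rep c 0 p)"
      by (rule epsL_eq[OF c cls_in_Lnc[OF zero_in_freeLie] True self_in_cls[OF zero_in_freeLie] p])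
    also have "\<dots> = C"
      unfolding eps_rep_zero[OF c] using Lnc_eq_cls[OF True p] by simp
    finally show ?thesis using True by (simp add: idL_def)
  qed (simp add: epsL_def idL_def)
qed

lemma epsL_cong:
  fixes u u' g :: "'k::field ncpoly"
  assumes c: "c \<ge> 1" and U: "U \<in> Lnc n c" and u: "u \<in> U" and u': "u' \<in> freeLie n"
    and g: "g \<in> lcs n (c - 1)" and H: "u' - u - g \<in> idealI n c"
  shows "epsL n c U = epsL n c (cls n c u')"
proof
  fix C :: "'k ncpoly set"
  have uL: "u \<in> freeLie n" using u Lnc_subset_freeLie[OF U] by blast
  show "epsL n c U C = epsL n c (cls n c u') C"
  proof (cases "C \<in> Lnc n c")
    case True
    obtain p where p: "p \<in> C" using Lnc_some_mem[OF True] by blast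
    have pL: "p \<in> freeLie n" using p Lnc_subset_freeLie[OF True] by blast
    have "eps_rep c u' p - eps_rep c u p \<in> idealI n c"
      by (rule eps_rep_cong_left[OF c u' uL pL g H])
    then have "cls n c (eps_rep c u' p) = cls n c (eps_rep c u p)"
      using cls_eq_iff eps_rep_freeLie u' uL pL by blast
    then show ?thesis
      using epsL_eq[OF c U True u p] epsL_eq[OF c cls_in_Lnc[OF u'] True self_in_cls[OF u'] p]
      by simp
  qed (simp add: epsL_def)
qed

lemma epsL_preserves_symLnc:
  fixes U C :: "'k::field ncpoly set"
  assumes c: "c \<ge> 1" and U: "U \<in> symLnc n c" and C: "C \<in> symLnc n c"
  shows "epsL n c U C \<in> symLnc n c"
proof -
  have UL: "U \<in> Lnc n c" and CL: "C \<in> Lnc n c"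
    using U C by (auto simp: symLnc_def)
  obtain u p where u: "u \<in> U" and p: "p \<in> C"
    using Lnc_some_mem[OF UL] Lnc_some_mem[OF CL] by blast
  have uL: "u \<in> freeLie n" and pL: "p \<in> freeLie n"
    using u p Lnc_subset_freeLie UL CL by blast+
  have "cls n c (eps_rep c u p) \<in> symLnc n c"
    unfolding cls_in_symLnc_iff[OF eps_rep_freeLie[OF uL pL]]
  proof (intro allI impI)
    fix \<pi> assume pi: "\<pi> permutes {..<n}"
    have puL: "perm_act \<pi> u \<in> freeLie n" by (rule perm_act_freeLie[OF pi uL])
    have "eps_rep c (perm_act \<pi> u) (perm_act \<pi> p) - eps_rep c (perm_act \<pi> u) p \<in> idealI n c"
      by (rule eps_rep_cong_right[OF puL symLnc_perm_act_diff[OF C p pi]])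
    moreover have "eps_rep c (perm_act \<pi> u) p - eps_rep c u p \<in> idealI n c"
      by (rule eps_rep_idealI_cong_left[OF c puL uL pL symLnc_perm_act_diff[OF U u pi]])
    ultimately show "perm_act \<pi> (eps_rep c u p) - eps_rep c u p \<in> idealI n c"
      unfolding perm_act_eps_rep by (rule ncsubspace_diff_trans[OF ncsubspace_idealI])
  qed
  then show ?thesis using epsL_eq[OF c UL CL u p] by simp
qed

section \<open>Coefficient functionals vanishing on \<open>L\<^sub>n''\<close>\<close>

text \<open>Swapping the two factors of a product permutes the words of a fixed content, so
  \<open>content_coeff\<close> kills all commutators. On a product \<open>a b\<close> with \<open>b [] = 0\<close>,
  \<open>content_coeff_snoc\<close> only sees \<open>content_coeff\<close> of \<open>a\<close>; hence it kills \<open>[L\<^sub>n', L\<^sub>n']\<close>.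
  On the metabelian basis below it is a coordinate function.\<close>

definition content_coeff :: "'k::field ncpoly \<Rightarrow> nat multiset \<Rightarrow> 'k" where
  "content_coeff p R = (\<Sum>v\<in>permutations_of_multiset R. p v)"

definition content_coeff_snoc :: "'k::field ncpoly \<Rightarrow> nat \<Rightarrow> nat multiset \<Rightarrow> 'k" where
  "content_coeff_snoc p e R = (\<Sum>v\<in>permutations_of_multiset R. p (v @ [e]))"

definition word_splits :: "nat multiset \<Rightarrow> (nat list \<times> nat list) set" where
  "word_splits R = {(v1, v2). mset v1 + mset v2 = R}"

definition sub_words :: "nat multiset \<Rightarrow> nat list set" where
  "sub_words R = {v. mset v \<subseteq># R}"

lemma mem_permutations_of_multiset_iff: "v \<in> permutations_of_multiset R \<longleftrightarrow> mset v = R"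
  by (simp add: permutations_of_multiset_def)

lemma finite_sub_words: "finite (sub_words R)"
proof (rule finite_subset)
  show "sub_words R \<subseteq> {v. set v \<subseteq> set_mset R \<and> length v \<le> size R}"
    unfolding sub_words_def
    by (auto dest: mset_subset_eqD size_mset_mono simp: size_mset[symmetric] simp del: size_mset)
qed (rule finite_lists_length_le, simp)

lemma sum_take_drop_word_splits:
  "(\<Sum>v\<in>permutations_of_multiset R. \<Sum>i\<le>length v. f (take i v) (drop i v))
     = (\<Sum>(v1, v2)\<in>word_splits R. f v1 v2)"
proof -
  have "(\<Sum>v\<in>permutations_of_multiset R. \<Sum>i\<le>length v. f (take i v) (drop i v))
     = (\<Sum>(v, i)\<in>(SIGMA v:permutations_of_multiset R. {..length v}). f (take i v) (drop i v))"
    by (rule sum.Sigma) auto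
  also have "\<dots> = (\<Sum>(v1, v2)\<in>word_splits R. f v1 v2)"
    by (rule sum.reindex_bij_witness[where i = "\<lambda>(v1, v2). (v1 @ v2, length v1)"
          and j = "\<lambda>(v, i). (take i v, drop i v)"])
       (auto simp: word_splits_def mem_permutations_of_multiset_iff min_def
          simp flip: mset_append)
  finally show ?thesis .
qed

lemma sum_word_splits_Sigma:
  "(\<Sum>(v1, v2)\<in>word_splits R. f v1 v2)
     = (\<Sum>v1\<in>sub_words R. \<Sum>v2\<in>permutations_of_multiset (R - mset v1). f v1 v2)"
proof -
  have "word_splits R = (SIGMA v1:sub_words R. permutations_of_multiset (R - mset v1))"
    by (auto simp: word_splits_def sub_words_def mem_permutations_of_multiset_iff)
  then show ?thesis
    by (simp add: sum.Sigma finite_sub_words)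
qed

lemma sum_word_splits_swap: "(\<Sum>(v1, v2)\<in>word_splits R. f v1 v2) = (\<Sum>(v1, v2)\<in>word_splits R. f v2 v1)"
  by (rule sum.reindex_bij_witness[where i = "\<lambda>(a, b). (b, a)" and j = "\<lambda>(a, b). (b, a)"])
     (auto simp: word_splits_def add.commute)

lemma content_coeff_add: "content_coeff (p + q) R = content_coeff p R + content_coeff q R"
  by (simp add: content_coeff_def sum.distrib)

lemma content_coeff_diff: "content_coeff (p - q) R = content_coeff p R - content_coeff q R"
  by (simp add: content_coeff_def sum_subtractf)

lemma content_coeff_ncsmul: "content_coeff (ncsmul a p) R = a * content_coeff p R"
  by (simp add: content_coeff_def sum_distrib_left)

lemma content_coeff_zero: "content_coeff 0 R = 0"
  by (simp add: content_coeff_def)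

lemma content_coeff_snoc_add:
  "content_coeff_snoc (p + q) e R = content_coeff_snoc p e R + content_coeff_snoc q e R"
  by (simp add: content_coeff_snoc_def sum.distrib)

lemma content_coeff_snoc_diff:
  "content_coeff_snoc (p - q) e R = content_coeff_snoc p e R - content_coeff_snoc q e R"
  by (simp add: content_coeff_snoc_def sum_subtractf)

lemma content_coeff_snoc_ncsmul: "content_coeff_snoc (ncsmul a p) e R = a * content_coeff_snoc p e R"
  by (simp add: content_coeff_snoc_def sum_distrib_left)

lemma content_coeff_snoc_zero: "content_coeff_snoc 0 e R = 0"
  by (simp add: content_coeff_snoc_def)

lemma content_coeff_snoc_sum:
  "content_coeff_snoc (\<Sum>i\<in>A. f i) e R = (\<Sum>i\<in>A. content_coeff_snoc (f i) e R)"
  unfolding content_coeff_snoc_def sum_fun_apply by (rule sum.swap)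

lemma content_coeff_ncmul: "content_coeff (ncmul p q) R = (\<Sum>(v1, v2)\<in>word_splits R. p v1 * q v2)"
  unfolding content_coeff_def ncmul_def by (rule sum_take_drop_word_splits)

lemma content_coeff_lbr: "content_coeff (lbr p q) R = 0"
proof -
  have "content_coeff (ncmul p q) R = content_coeff (ncmul q p) R"
    unfolding content_coeff_ncmul by (subst sum_word_splits_swap) (simp add: mult.commute case_prod_beta)
  then show ?thesis by (simp add: lbr_eq content_coeff_diff)
qed

lemma content_coeff_lcs1:
  assumes "(p :: 'k::field ncpoly) \<in> lcs n 1"
  shows "content_coeff p R = 0"
proof -
  have "brset (freeLie n) (freeLie n) \<subseteq> {p :: 'k ncpoly. \<forall>R. content_coeff p R = 0}"
  proof (rule brset_least)
    show "ncsubspace {p :: 'k ncpoly. \<forall>R. content_coeff p R = 0}"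
      by (auto simp: ncsubspace_def content_coeff_add content_coeff_ncsmul content_coeff_zero)
  qed (simp add: content_coeff_lbr)
  then show ?thesis using assms by auto
qed

lemma ncmul_snoc:
  assumes "q [] = 0"
  shows "ncmul p q (v @ [e]) = (\<Sum>i\<le>length v. p (take i v) * q (drop i v @ [e]))"
proof -
  have "ncmul p q (v @ [e])
      = (\<Sum>i\<le>length v. p (take i (v @ [e])) * q (drop i (v @ [e]))) + p (v @ [e]) * q []"
    by (simp add: ncmul_def sum.atMost_Suc)
  also have "\<dots> = (\<Sum>i\<le>length v. p (take i v) * q (drop i v @ [e]))"
    using assms by (auto intro!: sum.cong)
  finally show ?thesis .
qed

lemma content_coeff_snoc_ncmul:
  assumes "q [] = 0"
  shows "content_coeff_snoc (ncmul p q) e R = (\<Sum>(v1, v2)\<in>word_splits R. p v1 * q (v2 @ [e]))"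
  unfolding content_coeff_snoc_def ncmul_snoc[where q = q, OF assms]
  by (rule sum_take_drop_word_splits)

lemma content_coeff_snoc_ncmul_eq_0:
  assumes "\<And>R. content_coeff p R = 0" "q [] = 0"
  shows "content_coeff_snoc (ncmul p q) e R = 0"
proof -
  have "content_coeff_snoc (ncmul p q) e R = (\<Sum>(v1, v2)\<in>word_splits R. p v2 * q (v1 @ [e]))"
    unfolding content_coeff_snoc_ncmul[where q = q, OF assms(2)] by (rule sum_word_splits_swap)
  also have "\<dots> = (\<Sum>v1\<in>sub_words R. content_coeff p (R - mset v1) * q (v1 @ [e]))"
    by (simp add: sum_word_splits_Sigma content_coeff_def sum_distrib_right)
  also have "\<dots> = 0"
    using assms(1) by simp
  finally show ?thesis .
qed

lemma ncvar_Nil: "ncvar i [] = 0"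
  by (simp add: ncvar_def)

lemma content_coeff_snoc_ncvar_ncmul:
  assumes "d [] = 0"
  shows "content_coeff_snoc (ncmul (ncvar i) d) e R
    = (if i \<in># R then content_coeff_snoc d e (R - {#i#}) else 0)"
proof -
  have "content_coeff_snoc (ncmul (ncvar i) d) e R
      = (\<Sum>v1\<in>sub_words R. if v1 = [i] then content_coeff_snoc d e (R - mset v1) else 0)"
    unfolding content_coeff_snoc_ncmul[where q = d, OF assms] sum_word_splits_Sigma
    by (intro sum.cong refl) (simp add: ncvar_def content_coeff_snoc_def)
  also have "\<dots> = (if [i] \<in> sub_words R then content_coeff_snoc d e (R - {#i#}) else 0)"
    by (simp add: sum.delta[OF finite_sub_words])
  finally show ?thesis
    by (simp add: sub_words_def)
qed

lemma content_coeff_snoc_ncvar: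
  "content_coeff_snoc (ncvar b) e R = (if R = {#} \<and> e = b then 1 else 0)"
proof (cases "R = {#}")
  case False
  then show ?thesis
    by (auto simp: content_coeff_snoc_def mem_permutations_of_multiset_iff ncvar_def
        intro!: sum.neutral)
qed (simp add: content_coeff_snoc_def ncvar_def)

lemma content_coeff_snoc_lbr_ncvar:
  assumes "d \<in> lcs n 1"
  shows "content_coeff_snoc (lbr d (ncvar i)) e R
    = - (if i \<in># R then content_coeff_snoc d e (R - {#i#}) else 0)"
proof -
  have "d [] = 0"
    using lcs_short_word[OF assms, of "[]"] by simp
  moreover have "content_coeff_snoc (ncmul d (ncvar i)) e R = 0"
    by (rule content_coeff_snoc_ncmul_eq_0[where q = "ncvar i", OF content_coeff_lcs1[OF assms] ncvar_Nil])
  ultimately show ?thesis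
    by (simp add: lbr_eq content_coeff_snoc_diff content_coeff_snoc_ncvar_ncmul)
qed

lemma content_coeff_snoc_lbr_lcs1:
  assumes "a \<in> lcs n 1" "b \<in> lcs n 1"
  shows "content_coeff_snoc (lbr a b) e R = 0"
proof -
  have "a [] = 0" "b [] = 0"
    using lcs_short_word[OF assms(1), of "[]"] lcs_short_word[OF assms(2), of "[]"] by simp_all
  then show ?thesis
    using content_coeff_snoc_ncmul_eq_0[OF content_coeff_lcs1[OF assms(1)], of b]
      content_coeff_snoc_ncmul_eq_0[OF content_coeff_lcs1[OF assms(2)], of a]
    by (simp add: lbr_eq content_coeff_snoc_diff)
qed

lemma content_coeff_snoc_derived2:
  assumes "(d :: 'k::field ncpoly) \<in> derived2 n"
  shows "content_coeff_snoc d e R = 0"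
proof -
  have "derived2 n \<subseteq> {p :: 'k ncpoly. \<forall>e R. content_coeff_snoc p e R = 0}"
    unfolding derived2_eq
  proof (rule brset_least)
    show "ncsubspace {p :: 'k ncpoly. \<forall>e R. content_coeff_snoc p e R = 0}"
      by (auto simp: ncsubspace_def content_coeff_snoc_add content_coeff_snoc_ncsmul content_coeff_snoc_zero)
  qed (simp add: content_coeff_snoc_lbr_lcs1)
  then show ?thesis using assms by auto
qed

lemma content_coeff_snoc_lcs:
  assumes "p \<in> lcs n k" "size R < k"
  shows "content_coeff_snoc p e R = 0"
  unfolding content_coeff_snoc_def
proof (intro sum.neutral ballI)
  fix v assume "v \<in> permutations_of_multiset R"
  then have "length (v @ [e]) \<le> k"
    using assms(2) by (auto simp: mem_permutations_of_multiset_iff simp flip: size_mset)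
  then show "p (v @ [e]) = 0" by (rule lcs_short_word[OF assms(1)])
qed

lemma content_coeff_snoc_idealI:
  assumes "(p :: 'k::field ncpoly) \<in> idealI n k" "size R < k"
  shows "content_coeff_snoc p e R = 0"
proof -
  obtain a b where "p = a + b" "a \<in> derived2 n" "b \<in> lcs n k"
    using assms(1) unfolding idealI_eq by blast
  then show ?thesis
    by (simp add: content_coeff_snoc_add content_coeff_snoc_derived2 content_coeff_snoc_lcs assms(2))
qed

section \<open>Left-normed commutators and the metabelian basis\<close>

definition left_normed :: "'k::field ncpoly \<Rightarrow> nat list \<Rightarrow> 'k ncpoly" where
  "left_normed M cs = foldl (\<lambda>m c. lbr m (ncvar c)) M cs"

lemma left_normed_Nil [simp]: "left_normed M [] = M"
  by (simp add: left_normed_def)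

lemma left_normed_Cons: "left_normed M (c # cs) = left_normed (lbr M (ncvar c)) cs"
  by (simp add: left_normed_def)

lemma left_normed_snoc: "left_normed M (cs @ [c]) = lbr (left_normed M cs) (ncvar c)"
  by (simp add: left_normed_def)

lemma left_normed_diff: "left_normed (A - B) cs = left_normed A cs - left_normed B cs"
  by (induction cs arbitrary: A B) (simp_all only: left_normed_Nil left_normed_Cons lbr_diff_left)

lemma left_normed_lcs:
  assumes "M \<in> lcs n k" "set cs \<subseteq> {..<n}"
  shows "left_normed M cs \<in> lcs n (k + length cs)"
  using assms
proof (induction cs arbitrary: M k)
  case (Cons c cs)
  then have "lbr M (ncvar c) \<in> lcs n (Suc k)"
    by (intro lbr_lcs freeLie.var) auto
  then show ?case
    unfolding left_normed_Cons using Cons.IH[of "lbr M (ncvar c)" "Suc k"] Cons.prems by simp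
qed simp

lemma left_normed_vars_lcs1:
  assumes "a < n" "b < n" "set cs \<subseteq> {..<n}"
  shows "left_normed (lbr (ncvar a) (ncvar b)) cs \<in> lcs n 1"
  using left_normed_lcs[OF lbr_vars_lcs1[OF assms(1,2)] assms(3)] lcs_antimono[of 1 "1 + length cs" n]
  by auto

lemma left_normed_derived2:
  assumes "M \<in> derived2 n" "set cs \<subseteq> {..<n}"
  shows "left_normed M cs \<in> derived2 n"
  using assms
proof (induction cs arbitrary: M)
  case (Cons c cs)
  then have "lbr M (ncvar c) \<in> derived2 n"
    by (intro lbr_derived2 freeLie.var) auto
  then show ?case
    unfolding left_normed_Cons using Cons.IH Cons.prems by simp
qed simp

lemma left_normed_derived2_cong:
  assumes "A - B \<in> derived2 n" "set cs \<subseteq> {..<n}"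
  shows "left_normed A cs - left_normed B cs \<in> derived2 n"
  unfolding left_normed_diff[symmetric] by (rule left_normed_derived2[OF assms])

text \<open>By Jacobi the difference is \<open>[M, [x, y]] \<in> [L\<^sub>n', L\<^sub>n']\<close>: modulo \<open>L\<^sub>n''\<close>, the letters
  after the first two of a left-normed commutator commute.\<close>

lemma lbr_lbr_ncvar_swap:
  fixes M :: "'k::field ncpoly"
  assumes "M \<in> lcs n 1" "x < n" "y < n"
  shows "lbr (lbr M (ncvar x)) (ncvar y) - lbr (lbr M (ncvar y)) (ncvar x) \<in> derived2 n"
proof -
  have "lbr (lbr M (ncvar x)) (ncvar y) - lbr (lbr M (ncvar y)) (ncvar x)
      = lbr M (lbr (ncvar x) (ncvar y))"
    using lbr_jacobi[of M "ncvar x" "ncvar y"] by simp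
  also have "\<dots> \<in> derived2 n"
    by (rule lbr_lcs1_in_derived2[OF assms(1) lbr_vars_lcs1[OF assms(2,3)]])
  finally show ?thesis .
qed

lemma left_normed_insort:
  fixes M :: "'k::field ncpoly"
  assumes "M \<in> lcs n 1" "x < n" "set ys \<subseteq> {..<n}"
  shows "left_normed M (x # ys) - left_normed M (insort x ys) \<in> derived2 n"
  using assms
proof (induction ys arbitrary: M)
  case Nil
  have "left_normed M [x] - left_normed M (insort x []) = 0"
    by simp
  then show ?case by (metis ncsubspace_zero[OF ncsubspace_derived2])
next
  case (Cons y ys)
  show ?case
  proof (cases "x \<le> y")
    case True
    then have "left_normed M (x # y # ys) - left_normed M (insort x (y # ys)) = 0"
      by simp
    then show ?thesis by (metis ncsubspace_zero[OF ncsubspace_derived2])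
  next
    case False
    have y: "y < n" and ys: "set ys \<subseteq> {..<n}"
      using Cons.prems by auto
    have "left_normed M (x # y # ys) - left_normed M (y # x # ys) \<in> derived2 n"
      unfolding left_normed_Cons
      by (rule left_normed_derived2_cong[OF lbr_lbr_ncvar_swap[OF Cons.prems(1,2) y] ys])
    moreover have "left_normed M (y # x # ys) - left_normed M (y # insort x ys) \<in> derived2 n"
      unfolding left_normed_Cons[of M y]
      by (rule Cons.IH[OF lbr_var_lcs1[OF Cons.prems(1) y] Cons.prems(2) ys])
    moreover have "insort x (y # ys) = y # insort x ys"
      using False by simp
    ultimately show ?thesis
      by (metis ncsubspace_diff_trans[OF ncsubspace_derived2])
  qed
qed

lemma left_normed_sort:
  fixes M :: "'k::field ncpoly"
  assumes "M \<in> lcs n 1" "set xs \<subseteq> {..<n}"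
  shows "left_normed M xs - left_normed M (sort xs) \<in> derived2 n"
  using assms
proof (induction xs arbitrary: M)
  case Nil
  have "left_normed M [] - left_normed M (sort []) = 0"
    by simp
  then show ?case by (metis ncsubspace_zero[OF ncsubspace_derived2])
next
  case (Cons x xs)
  have x: "x < n" and xs: "set xs \<subseteq> {..<n}"
    using Cons.prems by auto
  have "left_normed M (x # xs) - left_normed M (x # sort xs) \<in> derived2 n"
    unfolding left_normed_Cons by (rule Cons.IH[OF lbr_var_lcs1[OF Cons.prems(1) x] xs])
  moreover have "left_normed M (x # sort xs) - left_normed M (insort x (sort xs)) \<in> derived2 n"
    by (rule left_normed_insort[OF Cons.prems(1) x]) (use xs in simp)
  moreover have "sort (x # xs) = insort x (sort xs)"
    by simp
  ultimately show ?case
    by (metis ncsubspace_diff_trans[OF ncsubspace_derived2])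
qed

lemma left_normed_mset_cong:
  fixes M :: "'k::field ncpoly"
  assumes "M \<in> lcs n 1" "set xs \<subseteq> {..<n}" "mset xs = mset ys"
  shows "left_normed M xs - left_normed M ys \<in> derived2 n"
proof -
  have ys: "set ys \<subseteq> {..<n}"
    using assms(2,3) by (metis set_mset_mset)
  have "sort ys = sort xs"
    using assms(3) by (metis properties_for_sort mset_sort sorted_sort)
  then have "left_normed M (sort xs) - left_normed M ys \<in> derived2 n"
    using ncsubspace_diff_commute[OF ncsubspace_derived2 left_normed_sort[OF assms(1) ys]] by simp
  then show ?thesis
    by (rule ncsubspace_diff_trans[OF ncsubspace_derived2 left_normed_sort[OF assms(1,2)]])
qed

lemma mset_remove1_eq_iff: "c \<in># R \<and> R - {#c#} = X \<longleftrightarrow> R = add_mset c X"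
  by (metis add_mset_remove_trivial insert_DiffM union_single_eq_member)

lemma content_coeff_snoc_ncmul_ncvars:
  "content_coeff_snoc (ncmul (ncvar x) (ncvar y)) e R = (if R = {#x#} \<and> e = y then 1 else 0)"
proof -
  have "content_coeff_snoc (ncmul (ncvar x) (ncvar y)) e R
      = (if x \<in># R then content_coeff_snoc (ncvar y) e (R - {#x#}) else 0)"
    by (rule content_coeff_snoc_ncvar_ncmul[where d = "ncvar y", OF ncvar_Nil])
  also have "\<dots> = (if x \<in># R \<and> R - {#x#} = {#} \<and> e = y then 1 else 0)"
    unfolding content_coeff_snoc_ncvar by simp
  also have "x \<in># R \<and> R - {#x#} = {#} \<and> e = y \<longleftrightarrow> R = {#x#} \<and> e = y"
    using mset_remove1_eq_iff[of x R "{#}"] by blast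
  finally show ?thesis .
qed

lemma content_coeff_snoc_left_normed:
  assumes "a < n" "b < n" "set cs \<subseteq> {..<n}"
  shows "content_coeff_snoc (left_normed (lbr (ncvar a) (ncvar b)) cs) e R =
    (-1) ^ length cs * ((if R = add_mset a (mset cs) \<and> e = b then 1 else 0)
                       - (if R = add_mset b (mset cs) \<and> e = a then 1 else 0))"
  using assms(3)
proof (induction cs arbitrary: R rule: rev_induct)
  case Nil
  have Nil_eq: "left_normed (lbr (ncvar a) (ncvar b)) []
      = ncmul (ncvar a) (ncvar b) - ncmul (ncvar b) (ncvar a)"
    by (simp add: lbr_eq)
  show ?case
    unfolding Nil_eq content_coeff_snoc_diff content_coeff_snoc_ncmul_ncvars
    by (simp only: list.size power_0 mult_1 mset.simps(1))
next
  case (snoc c cs)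
  have cs: "set cs \<subseteq> {..<n}"
    using snoc.prems by auto
  have lhs: "content_coeff_snoc (left_normed (lbr (ncvar a) (ncvar b)) (cs @ [c])) e R
      = - (if c \<in># R then content_coeff_snoc (left_normed (lbr (ncvar a) (ncvar b)) cs) e (R - {#c#})
           else 0)"
    unfolding left_normed_snoc by (rule content_coeff_snoc_lbr_ncvar[OF left_normed_vars_lcs1[OF assms(1,2) cs]])
  define X1 where "X1 = (if R = add_mset a (mset (cs @ [c])) \<and> e = b then 1 else (0::'a))"
  define X2 where "X2 = (if R = add_mset b (mset (cs @ [c])) \<and> e = a then 1 else (0::'a))"
  show ?case
  proof (cases "c \<in># R")
    case True
    have remove_c: "R - {#c#} = add_mset x (mset cs) \<longleftrightarrow> R = add_mset x (mset (cs @ [c]))" for x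
      using mset_remove1_eq_iff[of c R "add_mset x (mset cs)"] True
      by (simp add: add_mset_commute[of x c])
    have "content_coeff_snoc (left_normed (lbr (ncvar a) (ncvar b)) cs) e (R - {#c#})
        = (-1) ^ length cs * (X1 - X2)"
      unfolding snoc.IH[OF cs] X1_def X2_def remove_c ..
    then show ?thesis
      unfolding lhs X1_def[symmetric] X2_def[symmetric] using True by simp
  next
    case False
    then have "X1 = 0" "X2 = 0"
      unfolding X1_def X2_def by auto
    then show ?thesis
      unfolding lhs X1_def[symmetric] X2_def[symmetric] using False by simp
  qed
qed

text \<open>The metabelian basis of the homogeneous component of degree \<open>m + 1\<close> of \<open>L\<^sub>n\<^sub>,\<^sub>c\<close>:
  the left-normed commutators \<open>[x\<^sub>a, x\<^sub>b, x\<^sub>c\<^sub>1, \<dots>, x\<^sub>c\<^sub>k]\<close> with \<open>a > b \<le> c\<^sub>1 \<le> \<dots> \<le> c\<^sub>k\<close>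
  and \<open>k = m - 1\<close>. \<^term>\<open>mb_span n m\<close> consists of the elements congruent to a linear
  combination of them modulo \<open>L\<^sub>n'' + \<gamma>\<^sup>m\<^sup>+\<^sup>2(L\<^sub>n)\<close>.\<close>

definition mb_index :: "nat \<Rightarrow> nat \<Rightarrow> (nat \<times> nat \<times> nat list) set" where
  "mb_index n m = {(a, b, cs). a < n \<and> b < a \<and> sorted cs \<and> length cs = m - 1 \<and> (\<forall>c\<in>set cs. b \<le> c \<and> c < n)}"

definition mb_elem :: "nat \<times> nat \<times> nat list \<Rightarrow> 'k::field ncpoly" where
  "mb_elem t = (case t of (a, b, cs) \<Rightarrow> left_normed (lbr (ncvar a) (ncvar b)) cs)"

definition mb_span :: "nat \<Rightarrow> nat \<Rightarrow> 'k::field ncpoly set" where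
  "mb_span n m = {g. \<exists>l. g - (\<Sum>t\<in>mb_index n m. ncsmul (l t) (mb_elem t)) \<in> idealI n (Suc m)}"

lemma finite_mb_index: "finite (mb_index n m)"
proof (rule finite_subset)
  show "mb_index n m \<subseteq> {..<n} \<times> {..<n} \<times> {cs. set cs \<subseteq> {..<n} \<and> length cs = m - 1}"
    unfolding mb_index_def by auto
qed (intro finite_cartesian_product finite_lists_length_eq; simp)

lemma mb_spanI: "g - (\<Sum>t\<in>mb_index n m. ncsmul (l t) (mb_elem t)) \<in> idealI n (Suc m) \<Longrightarrow> g \<in> mb_span n m"
  unfolding mb_span_def by blast

lemma mb_span_cong:
  assumes "g' \<in> mb_span n m" "g - g' \<in> idealI n (Suc m)"
  shows "g \<in> mb_span n m"
proof -
  obtain l where l: "g' - (\<Sum>t\<in>mb_index n m. ncsmul (l t) (mb_elem t)) \<in> idealI n (Suc m)"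
    using assms(1) unfolding mb_span_def by blast
  have "g - (\<Sum>t\<in>mb_index n m. ncsmul (l t) (mb_elem t))
      = (g - g') + (g' - (\<Sum>t\<in>mb_index n m. ncsmul (l t) (mb_elem t)))"
    by simp
  then show ?thesis
    using ncsubspace_add[OF ncsubspace_idealI assms(2) l] by (intro mb_spanI[where l = l]) simp
qed

lemma ncsubspace_mb_span: "ncsubspace (mb_span n m :: 'k::field ncpoly set)"
  unfolding ncsubspace_def
proof (intro conjI ballI allI)
  show "0 \<in> mb_span n m"
    by (rule mb_spanI[where l = "\<lambda>t. 0"]) (simp add: ncsubspace_zero[OF ncsubspace_idealI])
next
  fix p q :: "'k ncpoly" assume "p \<in> mb_span n m" "q \<in> mb_span n m"
  then obtain l l' where l: "p - (\<Sum>t\<in>mb_index n m. ncsmul (l t) (mb_elem t)) \<in> idealI n (Suc m)"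
    and l': "q - (\<Sum>t\<in>mb_index n m. ncsmul (l' t) (mb_elem t)) \<in> idealI n (Suc m)"
    unfolding mb_span_def by blast
  have e: "(p + q) - (\<Sum>t\<in>mb_index n m. ncsmul (l t + l' t) (mb_elem t))
     = (p - (\<Sum>t\<in>mb_index n m. ncsmul (l t) (mb_elem t)))
       + (q - (\<Sum>t\<in>mb_index n m. ncsmul (l' t) (mb_elem t)))"
    by (simp add: ncsmul_add_left sum.distrib algebra_simps)
  show "p + q \<in> mb_span n m"
    by (rule mb_spanI[where l = "\<lambda>t. l t + l' t"]) (unfold e, rule ncsubspace_add[OF ncsubspace_idealI l l'])
next
  fix a and p :: "'k ncpoly" assume "p \<in> mb_span n m"
  then obtain l where l: "p - (\<Sum>t\<in>mb_index n m. ncsmul (l t) (mb_elem t)) \<in> idealI n (Suc m)"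
    unfolding mb_span_def by blast
  have e: "ncsmul a p - (\<Sum>t\<in>mb_index n m. ncsmul (a * l t) (mb_elem t))
     = ncsmul a (p - (\<Sum>t\<in>mb_index n m. ncsmul (l t) (mb_elem t)))"
    by (simp add: ncsmul_diff_right ncsmul_sum_right ncsmul_ncsmul)
  show "ncsmul a p \<in> mb_span n m"
    by (rule mb_spanI[where l = "\<lambda>t. a * l t"]) (unfold e, rule ncsubspace_ncsmul[OF ncsubspace_idealI l])
qed

lemma mb_elem_in_mb_span:
  assumes "t \<in> mb_index n m"
  shows "mb_elem t \<in> mb_span n m"
proof (rule mb_spanI[where l = "\<lambda>t'. if t' = t then 1 else 0"])
  have "(\<Sum>t'\<in>mb_index n m. ncsmul (if t' = t then 1 else 0) (mb_elem t'))
      = (\<Sum>t'\<in>mb_index n m. if t' = t then mb_elem t' else 0)"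
    by (intro sum.cong refl) simp
  also have "\<dots> = mb_elem t"
    using assms finite_mb_index by (simp add: sum.delta)
  finally have sum_eq: "(\<Sum>t'\<in>mb_index n m. ncsmul (if t' = t then 1 else 0) (mb_elem t')) = mb_elem t" .
  show "mb_elem t - (\<Sum>t'\<in>mb_index n m. ncsmul (if t' = t then 1 else 0) (mb_elem t'))
      \<in> idealI n (Suc m)"
    unfolding sum_eq diff_self by (rule ncsubspace_zero[OF ncsubspace_idealI])
qed

definition linear_part :: "nat \<Rightarrow> 'k::field ncpoly \<Rightarrow> 'k ncpoly" where
  "linear_part n p = (\<Sum>i<n. ncsmul (p [i]) (ncvar i))"

lemma linear_part_add: "linear_part n (p + q) = linear_part n p + linear_part n q"
  by (simp add: linear_part_def ncsmul_add_left sum.distrib)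

lemma linear_part_ncsmul: "linear_part n (ncsmul a p) = ncsmul a (linear_part n p)"
  by (simp add: linear_part_def ncsmul_sum_right ncsmul_ncsmul)

lemma linear_part_ncvar: "i < n \<Longrightarrow> linear_part n (ncvar i) = ncvar i"
proof -
  assume i: "i < n"
  have "linear_part n (ncvar i) = (\<Sum>k<n. if k = i then ncvar k else 0)"
    unfolding linear_part_def by (intro sum.cong refl) (simp add: ncvar_def)
  also have "\<dots> = ncvar i"
    using i by (simp add: sum.delta)
  finally show ?thesis .
qed

lemma linear_part_lcs1: "p \<in> lcs n 1 \<Longrightarrow> linear_part n p = 0"
  unfolding linear_part_def using lcs_short_word[of p n 1] by simp

lemma diff_linear_part_lcs1:
  fixes p :: "'k::field ncpoly"
  assumes "p \<in> freeLie n"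
  shows "p - linear_part n p \<in> lcs n 1"
  using assms
proof (induction rule: freeLie.induct)
  case zero
  have "nczero - linear_part n (nczero :: 'k ncpoly) = 0"
    by (simp add: nczero_eq linear_part_def)
  then show ?case by (metis ncsubspace_zero[OF ncsubspace_lcs])
next
  case (var i)
  then have "ncvar i - linear_part n (ncvar i :: 'k ncpoly) = 0"
    by (simp add: linear_part_ncvar)
  then show ?case by (metis ncsubspace_zero[OF ncsubspace_lcs])
next
  case (add p q)
  have "ncadd p q - linear_part n (ncadd p q) = (p - linear_part n p) + (q - linear_part n q)"
    by (simp add: ncadd_eq linear_part_add)
  then show ?case by (metis ncsubspace_add[OF ncsubspace_lcs add.IH])
next
  case (smul p a)
  have "ncsmul a p - linear_part n (ncsmul a p) = ncsmul a (p - linear_part n p)"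
    by (simp add: linear_part_ncsmul ncsmul_diff_right)
  then show ?case by (metis ncsubspace_ncsmul[OF ncsubspace_lcs smul.IH])
next
  case (br p q)
  then have "lbr p q \<in> lcs n 1"
    by (simp add: lbr_in_brset)
  then show ?case
    using linear_part_lcs1 by (metis diff_zero)
qed

lemma lbr_linear_part_left: "lbr (linear_part n x) b = (\<Sum>i<n. ncsmul (x [i]) (lbr (ncvar i) b))"
  unfolding linear_part_def lbr_sum_left lbr_ncsmul_left ..

lemma lbr_linear_part_right: "lbr a (linear_part n x) = (\<Sum>i<n. ncsmul (x [i]) (lbr a (ncvar i)))"
  unfolding linear_part_def lbr_sum_right lbr_ncsmul_right ..

lemma lbr_ncvars_in_mb_span:
  assumes "i < n" "k < n"
  shows "(lbr (ncvar k) (ncvar i) :: 'k::field ncpoly) \<in> mb_span n 1"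
proof (cases rule: linorder_cases[of i k])
  case less
  then have "(k, i, []) \<in> mb_index n 1"
    using assms by (simp add: mb_index_def)
  then show ?thesis
    using mb_elem_in_mb_span by (fastforce simp: mb_elem_def)
next
  case equal
  show ?thesis
    unfolding equal lbr_self by (rule ncsubspace_zero[OF ncsubspace_mb_span])
next
  case greater
  then have "(i, k, []) \<in> mb_index n 1"
    using assms by (simp add: mb_index_def)
  then have "lbr (ncvar i) (ncvar k) \<in> (mb_span n 1 :: 'k ncpoly set)"
    using mb_elem_in_mb_span by (fastforce simp: mb_elem_def)
  then show ?thesis
    by (subst lbr_antisym) (rule ncsubspace_uminus[OF ncsubspace_mb_span])
qed

text \<open>\<open>x\<close> differs from its linear part by an element of \<open>\<gamma>\<^sup>2\<close>, whose bracket with \<open>a\<close> is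
  negligible modulo \<open>\<gamma>\<^sup>k\<^sup>+\<^sup>3\<close>.\<close>

lemma lbr_in_mb_span_if_ncvars:
  assumes a: "a \<in> lcs n k" and x: "x \<in> freeLie n"
    and vars: "\<And>i. i < n \<Longrightarrow> lbr a (ncvar i) \<in> mb_span n (Suc k)"
  shows "lbr a x \<in> mb_span n (Suc k)"
proof (rule mb_span_cong)
  show "lbr a (linear_part n x) \<in> mb_span n (Suc k)"
    unfolding lbr_linear_part_right
    by (intro ncsubspace_sum[OF ncsubspace_mb_span] ncsubspace_ncsmul[OF ncsubspace_mb_span] vars) simp
  have "lbr a (x - linear_part n x) \<in> lcs n (k + 2)"
    by (rule lbr_lcs_lcs1[OF diff_linear_part_lcs1[OF x] a])
  then show "lbr a x - lbr a (linear_part n x) \<in> idealI n (Suc (Suc k))"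
    unfolding lbr_diff_right[symmetric] by (intro lcs_in_idealI) simp
qed

lemma left_normed_in_mb_span:
  assumes "(a, b, ys) \<in> mb_index n m" "a < n" "b < n" "set xs \<subseteq> {..<n}" "mset xs = mset ys"
  shows "left_normed (lbr (ncvar a) (ncvar b)) xs \<in> (mb_span n m :: 'k::field ncpoly set)"
proof (rule mb_span_cong)
  show "left_normed (lbr (ncvar a) (ncvar b)) ys \<in> (mb_span n m :: 'k ncpoly set)"
    using mb_elem_in_mb_span[OF assms(1)] by (simp add: mb_elem_def)
  show "left_normed (lbr (ncvar a) (ncvar b)) xs - left_normed (lbr (ncvar a) (ncvar b)) ys
      \<in> (idealI n (Suc m) :: 'k ncpoly set)"
    by (rule derived2_in_idealI[OF left_normed_mset_cong[OF lbr_vars_lcs1[OF assms(2,3)] assms(4,5)]])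
qed

lemma left_normed_vars_jacobi:
  "left_normed (lbr (ncvar a) (ncvar b)) (i # cs)
     = left_normed (lbr (ncvar a) (ncvar i)) (b # cs) - left_normed (lbr (ncvar b) (ncvar i)) (a # cs)"
proof -
  have "lbr (lbr (ncvar a) (ncvar b)) (ncvar i)
      = lbr (lbr (ncvar a) (ncvar i)) (ncvar b) + lbr (ncvar a) (lbr (ncvar b) (ncvar i))"
    by (rule lbr_jacobi)
  also have "lbr (ncvar a) (lbr (ncvar b) (ncvar i)) = - lbr (lbr (ncvar b) (ncvar i)) (ncvar a)"
    by (rule lbr_antisym)
  finally have jacobi: "lbr (lbr (ncvar a) (ncvar b)) (ncvar i)
      = lbr (lbr (ncvar a) (ncvar i)) (ncvar b) - lbr (lbr (ncvar b) (ncvar i)) (ncvar a)"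
    unfolding diff_conv_add_uminus .
  show ?thesis
    unfolding left_normed_Cons jacobi left_normed_diff ..
qed

text \<open>Bracketing a basis element \<open>[x\<^sub>a, x\<^sub>b, \<dots>]\<close> with \<open>x\<^sub>i\<close>: if \<open>i \<ge> b\<close>, sort \<open>i\<close> into the tail;
  otherwise move \<open>x\<^sub>i\<close> to the third position and rewrite \<open>[x\<^sub>a, x\<^sub>b, x\<^sub>i]\<close> by Jacobi as
  \<open>[x\<^sub>a, x\<^sub>i, x\<^sub>b] - [x\<^sub>b, x\<^sub>i, x\<^sub>a]\<close>, two basis elements with second letter \<open>i\<close>.\<close>

lemma lbr_mb_elem_ncvar_in_mb_span:
  assumes t: "t \<in> mb_index n (Suc k)" and i: "i < n"
  shows "lbr (mb_elem t) (ncvar i) \<in> (mb_span n (Suc (Suc k)) :: 'k::field ncpoly set)"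
proof -
  obtain a b cs where tt: "t = (a, b, cs)"
    by (cases t)
  have a: "a < n" and ba: "b < a" and cs: "sorted cs" "length cs = k" "\<forall>c\<in>set cs. b \<le> c \<and> c < n"
    using t unfolding tt mb_index_def by auto
  have b: "b < n" and csn: "set cs \<subseteq> {..<n}"
    using a ba cs(3) by auto
  let ?M = "lbr (ncvar a) (ncvar b) :: 'k ncpoly"
  have e0: "lbr (mb_elem t) (ncvar i) = left_normed ?M (cs @ [i])"
    unfolding tt mb_elem_def left_normed_snoc by simp
  show ?thesis
  proof (cases "b \<le> i")
    case True
    then have "(a, b, insort i cs) \<in> mb_index n (Suc (Suc k))"
      using a ba cs i by (auto simp: mb_index_def sorted_insort set_insort_key)
    then show ?thesis
      unfolding e0 by (rule left_normed_in_mb_span[OF _ a b]) (use csn i in auto)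
  next
    case False
    have T1: "(a, i, insort b cs) \<in> mb_index n (Suc (Suc k))"
      and T2: "(b, i, insort a cs) \<in> mb_index n (Suc (Suc k))"
      using a b ba cs False i by (auto simp: mb_index_def sorted_insort set_insort_key)
    have "left_normed (lbr (ncvar a) (ncvar i)) (b # cs) \<in> (mb_span n (Suc (Suc k)) :: 'k ncpoly set)"
      by (rule left_normed_in_mb_span[OF T1 a i]) (use csn b in auto)
    moreover have "left_normed (lbr (ncvar b) (ncvar i)) (a # cs) \<in> (mb_span n (Suc (Suc k)) :: 'k ncpoly set)"
      by (rule left_normed_in_mb_span[OF T2 b i]) (use csn a in auto)
    ultimately have "left_normed ?M (i # cs) \<in> mb_span n (Suc (Suc k))"
      by (subst left_normed_vars_jacobi) (rule ncsubspace_diff[OF ncsubspace_mb_span])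
    moreover have "left_normed ?M (cs @ [i]) - left_normed ?M (i # cs) \<in> derived2 n"
      by (rule left_normed_mset_cong[OF lbr_vars_lcs1[OF a b]]) (use csn i in auto)
    ultimately show ?thesis
      unfolding e0 by (rule mb_span_cong[OF _ derived2_in_idealI])
  qed
qed

lemma lbr_ncvar_in_mb_span_Suc:
  assumes "g \<in> mb_span n (Suc k)" "i < n"
  shows "lbr g (ncvar i) \<in> (mb_span n (Suc (Suc k)) :: 'k::field ncpoly set)"
proof -
  obtain l where l: "g - (\<Sum>t\<in>mb_index n (Suc k). ncsmul (l t) (mb_elem t)) \<in> idealI n (Suc (Suc k))"
    using assms(1) unfolding mb_span_def by blast
  let ?S = "(\<Sum>t\<in>mb_index n (Suc k). ncsmul (l t) (mb_elem t)) :: 'k ncpoly"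
  have "lbr ?S (ncvar i) \<in> mb_span n (Suc (Suc k))"
    unfolding lbr_sum_left lbr_ncsmul_left
    by (intro ncsubspace_sum[OF ncsubspace_mb_span] ncsubspace_ncsmul[OF ncsubspace_mb_span]
        lbr_mb_elem_ncvar_in_mb_span assms(2))
  moreover have "lbr (g - ?S) (ncvar i) \<in> idealI n (Suc (Suc (Suc k)))"
    by (rule lbr_idealI_Suc[OF l freeLie.var[OF assms(2)]])
  ultimately show ?thesis
    unfolding lbr_diff_left by (rule mb_span_cong)
qed

lemma lbr_ncvar_in_mb_span_1:
  assumes "a \<in> freeLie n" "i < n"
  shows "lbr a (ncvar i) \<in> (mb_span n 1 :: 'k::field ncpoly set)"
proof (rule mb_span_cong)
  show "lbr (linear_part n a) (ncvar i) \<in> (mb_span n 1 :: 'k ncpoly set)"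
    unfolding lbr_linear_part_left
    by (intro ncsubspace_sum[OF ncsubspace_mb_span] ncsubspace_ncsmul[OF ncsubspace_mb_span]
        lbr_ncvars_in_mb_span assms(2)) simp
  have "lbr (a - linear_part n a) (ncvar i) \<in> lcs n (Suc 1)"
    by (rule lbr_lcs[OF diff_linear_part_lcs1[OF assms(1)] freeLie.var[OF assms(2)]])
  then show "lbr a (ncvar i) - lbr (linear_part n a) (ncvar i) \<in> idealI n (Suc 1)"
    unfolding lbr_diff_left[symmetric] by (rule lcs_in_idealI)
qed

lemma lcs_subset_mb_span: "(lcs n (Suc k) :: 'k::field ncpoly set) \<subseteq> mb_span n (Suc k)"
proof (induction k)
  case 0
  show ?case
    unfolding lcs.simps(2)
  proof (rule brset_least[OF _ ncsubspace_mb_span])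
    fix a x :: "'k ncpoly" assume a: "a \<in> lcs n 0" and x: "x \<in> freeLie n"
    show "lbr a x \<in> mb_span n (Suc 0)"
      using a lbr_ncvar_in_mb_span_1[of a n] by (intro lbr_in_mb_span_if_ncvars[OF a x]) auto
  qed
next
  case (Suc k)
  show ?case
    unfolding lcs.simps(2)[of n "Suc k"]
  proof (rule brset_least[OF _ ncsubspace_mb_span])
    fix a x :: "'k ncpoly" assume a: "a \<in> lcs n (Suc k)" and x: "x \<in> freeLie n"
    show "lbr a x \<in> mb_span n (Suc (Suc k))"
      using Suc.IH a by (intro lbr_in_mb_span_if_ncvars[OF a x] lbr_ncvar_in_mb_span_Suc) auto
  qed
qed

lemma sorted_mset_eq_imp_eq: "sorted xs \<Longrightarrow> sorted ys \<Longrightarrow> mset xs = mset ys \<Longrightarrow> xs = ys"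
  by (metis properties_for_sort sorted_sort_id)

lemma content_coeff_snoc_mb_elem:
  assumes t: "t \<in> mb_index n m" and t0: "(a0, b0, cs0) \<in> mb_index n m"
  shows "content_coeff_snoc (mb_elem t :: 'k::field ncpoly) a0 (add_mset b0 (mset cs0))
    = (if t = (a0, b0, cs0) then - ((-1) ^ (m - 1)) else 0)"
proof -
  obtain a b cs where tt: "t = (a, b, cs)"
    by (cases t)
  have A: "a < n" "b < a" "sorted cs" "length cs = m - 1" "\<forall>c\<in>set cs. b \<le> c \<and> c < n"
    using t unfolding tt mb_index_def by auto
  have A0: "a0 < n" "b0 < a0" "sorted cs0" "length cs0 = m - 1" "\<forall>c\<in>set cs0. b0 \<le> c \<and> c < n"
    using t0 unfolding mb_index_def by auto
  have bn: "b < n" and csn: "set cs \<subseteq> {..<n}"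
    using A(1,2,5) by auto
  have X1: "\<not> (add_mset b0 (mset cs0) = add_mset a (mset cs) \<and> a0 = b)"
  proof
    assume H: "add_mset b0 (mset cs0) = add_mset a (mset cs) \<and> a0 = b"
    then have "b0 = a \<or> b0 \<in> set cs"
      by (metis insert_iff set_mset_add_mset_insert set_mset_mset union_single_eq_member)
    then show False using A A0 H by auto
  qed
  have X2: "add_mset b0 (mset cs0) = add_mset b (mset cs) \<and> a0 = a \<longleftrightarrow> t = (a0, b0, cs0)"
  proof
    assume H: "add_mset b0 (mset cs0) = add_mset b (mset cs) \<and> a0 = a"
    have "b0 \<le> b" "b \<le> b0"
      using H A(5) A0(5) by (metis insert_iff set_mset_add_mset_insert set_mset_mset order_refl)+
    then have "b = b0" "mset cs0 = mset cs"
      using H by simp_all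
    then show "t = (a0, b0, cs0)"
      using tt H sorted_mset_eq_imp_eq[OF A(3) A0(3)] by simp
  qed (use tt in simp)
  have "content_coeff_snoc (mb_elem t :: 'k ncpoly) a0 (add_mset b0 (mset cs0)) =
    (-1) ^ length cs * ((if add_mset b0 (mset cs0) = add_mset a (mset cs) \<and> a0 = b then 1 else 0)
                       - (if add_mset b0 (mset cs0) = add_mset b (mset cs) \<and> a0 = a then 1 else 0))"
    unfolding tt mb_elem_def case_prod_conv by (rule content_coeff_snoc_left_normed[OF A(1) bn csn])
  also have "\<dots> = (if t = (a0, b0, cs0) then - ((-1) ^ (m - 1)) else 0)"
    using X1 X2 A(4) by simp
  finally show ?thesis .
qed

lemma content_coeff_snoc_mb_combination:
  assumes t0: "(a0, b0, cs0) \<in> mb_index n (Suc k)"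
  shows "content_coeff_snoc (\<Sum>t\<in>mb_index n (Suc k). ncsmul (l t) (mb_elem t) :: 'k::field ncpoly)
      a0 (add_mset b0 (mset cs0)) = l (a0, b0, cs0) * (- ((-1) ^ k))"
proof -
  have "content_coeff_snoc (\<Sum>t\<in>mb_index n (Suc k). ncsmul (l t) (mb_elem t) :: 'k ncpoly)
      a0 (add_mset b0 (mset cs0))
      = (\<Sum>t\<in>mb_index n (Suc k). l t * content_coeff_snoc (mb_elem t :: 'k ncpoly) a0 (add_mset b0 (mset cs0)))"
    unfolding content_coeff_snoc_sum content_coeff_snoc_ncsmul ..
  also have "\<dots> = (\<Sum>t\<in>mb_index n (Suc k). if t = (a0, b0, cs0) then l t * (- ((-1) ^ k)) else 0)"
  proof (intro sum.cong refl)
    fix t assume "t \<in> mb_index n (Suc k)"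
    from content_coeff_snoc_mb_elem[where 'k = 'k, OF this t0]
    show "l t * content_coeff_snoc (mb_elem t :: 'k ncpoly) a0 (add_mset b0 (mset cs0))
        = (if t = (a0, b0, cs0) then l t * (- ((-1) ^ k)) else 0)"
      by simp
  qed
  also have "\<dots> = l (a0, b0, cs0) * (- ((-1) ^ k))"
    using t0 finite_mb_index by (simp add: sum.delta)
  finally show ?thesis .
qed

text \<open>The functionals \<open>content_coeff_snoc\<close> read off the coordinates in the metabelian basis.\<close>

lemma mb_span_in_idealI:
  fixes g :: "'k::field ncpoly"
  assumes g: "g \<in> mb_span n (Suc k)"
    and coeffs: "\<And>e R. size R = Suc k \<Longrightarrow> content_coeff_snoc g e R = 0"
  shows "g \<in> idealI n (Suc (Suc k))"
proof -
  obtain l where l: "g - (\<Sum>t\<in>mb_index n (Suc k). ncsmul (l t) (mb_elem t)) \<in> idealI n (Suc (Suc k))"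
    using g unfolding mb_span_def by blast
  let ?S = "(\<Sum>t\<in>mb_index n (Suc k). ncsmul (l t) (mb_elem t)) :: 'k ncpoly"
  have S_coeffs: "content_coeff_snoc ?S e R = 0" if "size R = Suc k" for e R
  proof -
    have "content_coeff_snoc (g - ?S) e R = 0"
      by (rule content_coeff_snoc_idealI[OF l]) (use that in simp)
    then show ?thesis using coeffs[OF that] by (simp add: content_coeff_snoc_diff)
  qed
  have "l t = 0" if t: "t \<in> mb_index n (Suc k)" for t
  proof -
    obtain a0 b0 cs0 where tt: "t = (a0, b0, cs0)"
      by (cases t)
    have "length cs0 = k"
      using t unfolding tt mb_index_def by auto
    then show "l t = 0"
      using S_coeffs[of "add_mset b0 (mset cs0)" a0] content_coeff_snoc_mb_combination[where l = l and 'k = 'k, OF t[unfolded tt]]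
      unfolding tt by simp
  qed
  then have "?S = 0"
    by (simp add: sum.neutral)
  then show ?thesis using l by simp
qed

section \<open>Bracketing with \<open>x\<^sub>1 + \<dots> + x\<^sub>n\<close>\<close>

definition var_sum :: "nat \<Rightarrow> 'k::field ncpoly" where
  "var_sum n = (\<Sum>i<n. ncvar i)"

lemma var_sum_freeLie: "var_sum n \<in> freeLie n"
  unfolding var_sum_def by (intro ncsubspace_sum[OF ncsubspace_freeLie] freeLie.var) simp

lemma perm_act_var_sum:
  assumes "\<pi> permutes {..<n}"
  shows "perm_act \<pi> (var_sum n) = var_sum n"
proof -
  have "perm_act \<pi> (var_sum n) = (\<Sum>i<n. ncvar (\<pi> i))"
    unfolding var_sum_def perm_act_sum
    by (rule sum.cong[OF refl]) (rule perm_act_ncvar[OF permutes_bij[OF assms]])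
  also have "\<dots> = (\<Sum>i<n. ncvar i)"
    using sum.permute[OF assms, of ncvar] by (simp add: comp_def eq_commute)
  finally show ?thesis unfolding var_sum_def .
qed

lemma var_sum_apply: "var_sum n w = (\<Sum>i<n. ncvar i w)"
  unfolding var_sum_def sum_fun_apply ..

lemma var_sum_Nil: "var_sum n [] = 0"
  by (simp add: var_sum_apply ncvar_def)

lemma var_sum_singleton: "var_sum n [j] = (if j < n then 1 else 0)"
proof -
  have "var_sum n [j] = (\<Sum>i<n. if i = j then 1 else 0)"
    unfolding var_sum_apply by (intro sum.cong refl) (auto simp: ncvar_def)
  then show ?thesis by (simp add: sum.delta')
qed

lemma var_sum_two: "var_sum n [i, j] = 0"
  by (simp add: var_sum_apply ncvar_def)

lemma content_coeff_snoc_lbr_var_sum: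
  assumes "d \<in> lcs n 1"
  shows "content_coeff_snoc (lbr d (var_sum n)) e R
    = - (\<Sum>i<n. if i \<in># R then content_coeff_snoc d e (R - {#i#}) else 0)"
  unfolding var_sum_def lbr_sum_right content_coeff_snoc_sum content_coeff_snoc_lbr_ncvar[OF assms]
  by (simp add: sum_negf)

text \<open>Take \<open>R\<close> with \<open>h R \<noteq> 0\<close> containing the letter \<open>0\<close> as often as possible; in the sum for
  \<open>Q = R + {#0#}\<close> every term but \<open>h R\<close> then vanishes by maximality.\<close>

lemma mset_fun_eq_0_if_remove_sums_eq_0:
  fixes h :: "nat multiset \<Rightarrow> 'k::field"
  assumes H: "\<And>Q. size Q = Suc m \<Longrightarrow> (\<Sum>i<n. if i \<in># Q then h (Q - {#i#}) else 0) = 0"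
    and n: "0 < n" and R: "size R = m"
  shows "h R = 0"
proof (rule ccontr)
  assume "h R \<noteq> 0"
  let ?P = "\<lambda>X. size X = m \<and> h X \<noteq> 0"
  have "\<forall>y. ?P y \<longrightarrow> count y 0 < Suc m"
    by (auto simp: le_imp_less_Suc count_le_size[where x = 0, simplified])
  then obtain R0 where R0: "?P R0" and max: "\<And>y. ?P y \<Longrightarrow> count y 0 \<le> count R0 0"
    using ex_has_greatest_nat[of ?P R "\<lambda>y. count y 0" "Suc m"] R \<open>h R \<noteq> 0\<close> by blast
  let ?Q = "add_mset 0 R0"
  let ?f = "\<lambda>i. if i \<in># ?Q then h (?Q - {#i#}) else 0"
  have others: "?f i = 0" if "i \<in> {..<n} - {0}" for i
  proof (cases "i \<in># ?Q")
    case True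
    then have i: "i \<in># R0" "i \<noteq> 0"
      using that by auto
    have "0 < size R0"
      using i(1) by (cases R0) auto
    then have "size (add_mset 0 (R0 - {#i#})) = m"
      using i R0 by (simp add: size_Diff_singleton)
    moreover have "count (add_mset 0 (R0 - {#i#})) 0 > count R0 0"
      using i by simp
    ultimately have "h (add_mset 0 (R0 - {#i#})) = 0"
      using max by force
    moreover have "?Q - {#i#} = add_mset 0 (R0 - {#i#})"
      using i by auto
    ultimately show ?thesis by simp
  qed simp
  have "(\<Sum>i<n. ?f i) = ?f 0 + (\<Sum>i\<in>{..<n} - {0}. ?f i)"
    using n by (simp add: sum.remove)
  also have "\<dots> = h R0"
    using others by simp
  finally show False
    using H[of ?Q] R0 by simp
qed

text \<open>Torsion-freeness of \<open>[-, x\<^sub>1 + \<dots> + x\<^sub>n]\<close> on \<open>\<gamma>\<^sup>k\<^sup>+\<^sup>2(L\<^sub>n\<^sub>,\<^sub>c)\<close> up to higher terms.\<close>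

lemma lbr_var_sum_cancel:
  fixes g R :: "'k::field ncpoly"
  assumes n: "0 < n" and c: "Suc k + 2 \<le> c"
    and g: "g \<in> lcs n (Suc k)" and R: "R \<in> lcs n (Suc k + 2)"
    and H: "lbr g (var_sum n) - R \<in> idealI n c"
  shows "\<exists>g'\<in>lcs n (Suc (Suc k)). g - g' \<in> idealI n c"
proof -
  have g1: "g \<in> lcs n 1"
    using g lcs_antimono[of 1 "Suc k" n] by auto
  have Z: "(\<Sum>i<n. if i \<in># Q then content_coeff_snoc g e (Q - {#i#}) else 0) = 0"
    if Q: "size Q = Suc (Suc k)" for e Q
  proof -
    have "content_coeff_snoc (lbr g (var_sum n) - R) e Q = 0"
      by (rule content_coeff_snoc_idealI[OF H]) (use Q c in simp)
    moreover have "content_coeff_snoc R e Q = 0"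
      by (rule content_coeff_snoc_lcs[OF R]) (use Q in simp)
    ultimately show ?thesis
      using content_coeff_snoc_lbr_var_sum[OF g1] by (simp add: content_coeff_snoc_diff)
  qed
  have "content_coeff_snoc g e R' = 0" if "size R' = Suc k" for e R'
    by (rule mset_fun_eq_0_if_remove_sums_eq_0[where h = "content_coeff_snoc g e", OF Z n that])
  then have "g \<in> idealI n (Suc (Suc k))"
    by (intro mb_span_in_idealI lcs_subset_mb_span[THEN subsetD, OF g])
  then obtain a b where ab: "g = a + b" "a \<in> derived2 n" "b \<in> lcs n (Suc (Suc k))"
    unfolding idealI_eq by blast
  then have "g - b \<in> idealI n c"
    using derived2_in_idealI by simp
  then show ?thesis
    using ab(3) by blast
qed

lemma lbr_var_sum_linear_coeffs_eq:
  fixes g R :: "'k::field ncpoly"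
  assumes c: "2 \<le> c" and g: "g \<in> freeLie n" and R: "R \<in> lcs n 2"
    and H: "lbr g (var_sum n) - R \<in> idealI n c" and i: "i < n" and j: "j < n"
  shows "g [i] = g [j]"
proof -
  have "idealI n c \<subseteq> (lcs n 2 :: 'k ncpoly set)"
    by (rule idealI_subset_lcs) (use c in auto)
  then have "lbr g (var_sum n) - R \<in> lcs n 2"
    using H by blast
  then have "(lbr g (var_sum n) - R) [i, j] = 0"
    by (rule lcs_short_word) simp
  moreover have "R [i, j] = 0"
    using lcs_short_word[OF R, of "[i, j]"] by simp
  moreover have "ncmul p q [i, j] = p [] * q [i, j] + p [i] * q [j] + p [i, j] * q []" for p q :: "'k ncpoly"
    by (simp add: ncmul_def numeral_2_eq_2 atMost_Suc)
  then have "lbr g (var_sum n) [i, j] = g [i] - g [j]"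
    using freeLie_Nil[OF g] i j by (simp add: lbr_eq var_sum_Nil var_sum_singleton var_sum_two)
  ultimately show ?thesis
    by simp
qed

definition linear_coeff_sum :: "nat \<Rightarrow> 'k::field ncpoly \<Rightarrow> 'k" where
  "linear_coeff_sum n p = (\<Sum>i<n. p [i])"

lemma linear_coeff_sum_diff: "linear_coeff_sum n (p - q) = linear_coeff_sum n p - linear_coeff_sum n q"
  by (simp add: linear_coeff_sum_def sum_subtractf)

lemma linear_coeff_sum_lcs1: "p \<in> lcs n 1 \<Longrightarrow> linear_coeff_sum n p = 0"
  unfolding linear_coeff_sum_def using lcs_short_word[of p n 1] by simp

lemma linear_coeff_sum_perm_act:
  assumes "\<pi> permutes {..<n}"
  shows "linear_coeff_sum n (perm_act \<pi> p) = linear_coeff_sum n p"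
  using sum.permute[OF permutes_inv[OF assms], of "\<lambda>i. p [i]"]
  by (simp add: linear_coeff_sum_def perm_act_def comp_def eq_commute)

text \<open>In degree one the bracket with \<open>x\<^sub>1 + \<dots> + x\<^sub>n\<close> only sees that all linear
  coefficients are equal; the missing information is their sum, which is \<open>S\<^sub>n\<close>-invariant.
  Dividing by \<open>n\<close> needs characteristic zero.\<close>

lemma lcs1_if_lbr_var_sum:
  fixes g R :: "'k::field_char_0 ncpoly"
  assumes n: "0 < n" and c: "2 \<le> c" and g: "g \<in> freeLie n" and R: "R \<in> lcs n 2"
    and H: "lbr g (var_sum n) - R \<in> idealI n c" and sum0: "linear_coeff_sum n g = 0"
  shows "g \<in> lcs n 1"
proof -
  define a where "a = g [0]"
  have eq: "g [i] = a" if "i < n" for i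
    unfolding a_def using lbr_var_sum_linear_coeffs_eq[OF c g R H that n] .
  then have "linear_coeff_sum n g = of_nat n * a"
    by (simp add: linear_coeff_sum_def)
  then have "a = 0"
    using sum0 n by simp
  then have "linear_part n g = 0"
    using eq by (simp add: linear_part_def)
  then show ?thesis
    using diff_linear_part_lcs1[OF g] by simp
qed

section \<open>Recovering \<open>u\<close> from \<open>\<epsilon>\<^sub>u(x\<^sub>1 + \<dots> + x\<^sub>n)\<close>\<close>

lemma ad_funpow_add_Suc:
  "(ad (u + g) ^^ Suc k) v - (ad u ^^ Suc k) v
     = lbr ((ad (u + g) ^^ k) v - (ad u ^^ k) v) (u + g) + lbr ((ad u ^^ k) v) g"
  unfolding ad_funpow_Suc by (simp add: lbr_diff_left lbr_add_right algebra_simps)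

lemma ad_funpow_add_one: "(ad (u + g) ^^ Suc 0) v - (ad u ^^ Suc 0) v = lbr v g"
  unfolding ad_funpow_add_Suc funpow_0 id_apply diff_self lbr_zero_left add_0_left ..

lemma ad_funpow_add_diff_lcs:
  assumes u: "u \<in> freeLie n" and g: "g \<in> lcs n m" and v: "v \<in> freeLie n"
  shows "(ad (u + g) ^^ Suc k) v - (ad u ^^ Suc k) v \<in> lcs n (Suc m)"
    and "(ad (u + g) ^^ Suc (Suc k)) v - (ad u ^^ Suc (Suc k)) v \<in> lcs n (m + 2)"
proof -
  have ug: "u + g \<in> freeLie n"
    using g lcs_subset_freeLie by (blast intro: ncsubspace_add[OF ncsubspace_freeLie u])
  have ad_lcs1: "(ad u ^^ Suc j) v \<in> lcs n 1" for j
    using ad_funpow_lcs[OF u, of v 0 "Suc j"] v lcs_antimono[of 1 "Suc j" n] by auto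
  have tail: "lbr ((ad u ^^ Suc j) v) g \<in> lcs n (m + 2)" for j
    by (rule lbr_lcs1_lcs[OF ad_lcs1 g])
  show Suc_lcs: "(ad (u + g) ^^ Suc k) v - (ad u ^^ Suc k) v \<in> lcs n (Suc m)" for k
  proof (induction k)
    case 0
    show ?case
      unfolding ad_funpow_add_one by (rule lbr_lcs'[OF v g])
  next
    case (Suc k)
    have "lbr ((ad (u + g) ^^ Suc k) v - (ad u ^^ Suc k) v) (u + g) \<in> lcs n (Suc m)"
      using lbr_lcs[OF Suc.IH ug] lcs_Suc_subset by blast
    moreover have "lbr ((ad u ^^ Suc k) v) g \<in> lcs n (Suc m)"
      using tail lcs_antimono[of "Suc m" "m + 2" n] by auto
    ultimately show ?case
      unfolding ad_funpow_add_Suc[where k = "Suc k"] by (rule ncsubspace_add[OF ncsubspace_lcs])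
  qed
  have "lbr ((ad (u + g) ^^ Suc k) v - (ad u ^^ Suc k) v) (u + g) \<in> lcs n (m + 2)"
    using lbr_lcs[OF Suc_lcs ug] by simp
  then show "(ad (u + g) ^^ Suc (Suc k)) v - (ad u ^^ Suc (Suc k)) v \<in> lcs n (m + 2)"
    unfolding ad_funpow_add_Suc[where k = "Suc k"] by (rule ncsubspace_add[OF ncsubspace_lcs _ tail])
qed

lemma eps_rep_add_lcs:
  fixes u g v :: "'k::field ncpoly"
  assumes c: "2 \<le> c" and u: "u \<in> freeLie n" and g: "g \<in> lcs n m" and v: "v \<in> freeLie n"
  shows "\<exists>R\<in>lcs n (m + 2). eps_rep c (u + g) v - eps_rep c u v = lbr v g + R"
proof -
  define D where "D k = (ad (u + g) ^^ k) v - (ad u ^^ k) v" for k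
  have D0: "D 0 = 0" and D1: "D 1 = lbr v g"
    unfolding D_def One_nat_def ad_funpow_add_one by simp_all
  define R where "R = (\<Sum>k\<in>{..<c} - {1}. ncsmul (1 / of_nat (fact k)) (D k))"
  have "D k \<in> lcs n (m + 2)" if k: "k \<in> {..<c} - {1}" for k
  proof (cases k)
    case 0
    show ?thesis
      unfolding \<open>k = 0\<close> D0 by (rule ncsubspace_zero[OF ncsubspace_lcs])
  next
    case (Suc j)
    then obtain j' where "k = Suc (Suc j')"
      using k by (cases j) auto
    then show ?thesis
      unfolding D_def using ad_funpow_add_diff_lcs(2)[OF u g v] by simp
  qed
  then have R: "R \<in> lcs n (m + 2)"
    unfolding R_def by (intro ncsubspace_sum[OF ncsubspace_lcs] ncsubspace_ncsmul[OF ncsubspace_lcs])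
  have "eps_rep c (u + g) v - eps_rep c u v = (\<Sum>k<c. ncsmul (1 / of_nat (fact k)) (D k))"
    unfolding eps_rep_diff D_def ..
  also have "\<dots> = ncsmul (1 / of_nat (fact 1)) (D 1) + R"
    unfolding R_def using c by (subst sum.remove[of _ 1]) auto
  also have "\<dots> = lbr v g + R"
    unfolding D1 by simp
  finally show ?thesis
    using R by blast
qed

lemma lbr_var_sum_congruence:
  fixes u w g :: "'k::field ncpoly"
  assumes c: "m + 2 \<le> c" and u: "u \<in> freeLie n" and w: "w \<in> freeLie n" and g: "g \<in> lcs n m"
    and E: "eps_rep c w (var_sum n) - eps_rep c u (var_sum n) \<in> idealI n c"
    and wug: "w - u - g \<in> idealI n c"
  shows "\<exists>R\<in>lcs n (m + 2). lbr g (var_sum n) - R \<in> idealI n c"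
proof -
  let ?s = "var_sum n :: 'k ncpoly"
  have ug: "u + g \<in> freeLie n"
    using g lcs_subset_freeLie by (blast intro: ncsubspace_add[OF ncsubspace_freeLie u])
  have c2: "2 \<le> c"
    using c by simp
  obtain R where R: "R \<in> lcs n (m + 2)"
    and ER: "eps_rep c (u + g) ?s - eps_rep c u ?s = lbr ?s g + R"
    using eps_rep_add_lcs[OF c2 u g var_sum_freeLie] by blast
  have "w - (u + g) \<in> idealI n c"
    using wug by (simp add: algebra_simps)
  then have "eps_rep c w ?s - eps_rep c (u + g) ?s \<in> idealI n c"
    using c by (intro eps_rep_idealI_cong_left[OF _ w ug var_sum_freeLie]) auto
  then have "(eps_rep c w ?s - eps_rep c u ?s) - (eps_rep c w ?s - eps_rep c (u + g) ?s) \<in> idealI n c"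
    by (rule ncsubspace_diff[OF ncsubspace_idealI E])
  moreover have "lbr ?s g + R = (eps_rep c w ?s - eps_rep c u ?s) - (eps_rep c w ?s - eps_rep c (u + g) ?s)"
    unfolding ER[symmetric] by simp
  ultimately have "lbr ?s g + R \<in> idealI n c"
    by simp
  then have "- (lbr ?s g + R) \<in> idealI n c"
    by (rule ncsubspace_uminus[OF ncsubspace_idealI])
  moreover have "- (lbr ?s g + R) = lbr g ?s - R"
    using lbr_antisym[of ?s g] by simp
  ultimately show ?thesis
    using R by auto
qed

text \<open>Induction on the degree: \<open>w \<equiv> u + g\<close> with \<open>g \<in> \<gamma>\<^sup>m\<^sup>+\<^sup>1\<close> forces \<open>[g, x\<^sub>1 + \<dots> + x\<^sub>n]\<close> into
  \<open>\<gamma>\<^sup>m\<^sup>+\<^sup>3\<close>, and injectivity of this bracket lets \<open>g\<close> be moved one degree deeper.\<close>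

lemma eps_rep_var_sum_cong_step:
  fixes u w g :: "'k::field_char_0 ncpoly"
  assumes n: "0 < n" and cm: "m + 2 \<le> c" and u: "u \<in> freeLie n" and w: "w \<in> freeLie n"
    and E: "eps_rep c w (var_sum n) - eps_rep c u (var_sum n) \<in> idealI n c"
    and T: "linear_coeff_sum n w = linear_coeff_sum n u"
    and g: "g \<in> lcs n m" and wug: "w - u - g \<in> idealI n c"
  shows "\<exists>g'\<in>lcs n (Suc m). w - u - g' \<in> idealI n c"
proof -
  obtain R where R: "R \<in> lcs n (m + 2)" and X: "lbr g (var_sum n) - R \<in> idealI n c"
    using lbr_var_sum_congruence[OF cm u w g E wug] by blast
  show ?thesis
  proof (cases m)
    case 0
    have "idealI n c \<subseteq> (lcs n 1 :: 'k ncpoly set)"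
      by (rule idealI_subset_lcs) (use cm in auto)
    then have "linear_coeff_sum n (w - u - g) = 0"
      using wug linear_coeff_sum_lcs1 by blast
    then have "linear_coeff_sum n g = 0"
      using T by (simp add: linear_coeff_sum_diff)
    moreover have "2 \<le> c" "g \<in> freeLie n" "R \<in> lcs n 2"
      using cm g R unfolding 0 by (simp_all add: numeral_2_eq_2)
    ultimately have "g \<in> lcs n 1"
      using lcs1_if_lbr_var_sum[OF n _ _ _ X] by blast
    then show ?thesis
      using wug unfolding 0 One_nat_def by blast
  next
    case (Suc k)
    have "Suc k + 2 \<le> c" "g \<in> lcs n (Suc k)" "R \<in> lcs n (Suc k + 2)"
      using cm g R unfolding Suc by simp_all
    then obtain g' where g': "g' \<in> lcs n (Suc (Suc k))" and "g - g' \<in> idealI n c"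
      using lbr_var_sum_cancel[OF n _ _ _ X] by blast
    then have "(w - u - g) + (g - g') \<in> idealI n c"
      using ncsubspace_add[OF ncsubspace_idealI wug] by blast
    moreover have "(w - u - g) + (g - g') = w - u - g'"
      by (simp add: algebra_simps)
    ultimately show ?thesis
      using g' unfolding Suc by (metis bexI)
  qed
qed

lemma eps_rep_var_sum_cong_imp_lcs:
  fixes u w :: "'k::field_char_0 ncpoly"
  assumes n: "0 < n" and u: "u \<in> freeLie n" and w: "w \<in> freeLie n"
    and E: "eps_rep c w (var_sum n) - eps_rep c u (var_sum n) \<in> idealI n c"
    and T: "linear_coeff_sum n w = linear_coeff_sum n u"
  shows "\<exists>g\<in>lcs n (c - 1). w - u - g \<in> idealI n c"
proof -
  have "\<exists>g\<in>lcs n m. w - u - g \<in> idealI n c" if "m \<le> c - 1" for m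
    using that
  proof (induction m)
    case 0
    have "w - u \<in> lcs n 0"
      using ncsubspace_diff[OF ncsubspace_freeLie w u] by simp
    then show ?case
      using ncsubspace_zero[OF ncsubspace_idealI] by (metis diff_self)
  next
    case (Suc m)
    then have "m \<le> c - 1" and "m + 2 \<le> c"
      by simp_all
    moreover obtain g where "g \<in> lcs n m" "w - u - g \<in> idealI n c"
      using Suc.IH \<open>m \<le> c - 1\<close> by blast
    ultimately show ?case
      using eps_rep_var_sum_cong_step[OF n _ u w E T] by blast
  qed
  then show ?thesis by simp
qed

section \<open>Symmetrization\<close>

definition perm_average :: "nat \<Rightarrow> 'k::field_char_0 ncpoly \<Rightarrow> 'k ncpoly" where
  "perm_average n u = ncsmul (1 / fact n) (\<Sum>\<pi>\<in>{\<pi>. \<pi> permutes {..<n}}. perm_act \<pi> u)"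

lemma perm_average_freeLie: "u \<in> freeLie n \<Longrightarrow> perm_average n u \<in> freeLie n"
  unfolding perm_average_def
  by (intro ncsubspace_ncsmul[OF ncsubspace_freeLie] ncsubspace_sum[OF ncsubspace_freeLie]
      perm_act_freeLie) simp_all

lemma perm_act_perm_average:
  assumes sigma: "\<sigma> permutes {..<n}"
  shows "perm_act \<sigma> (perm_average n u) = perm_average n u"
proof -
  let ?P = "{\<pi>. \<pi> permutes {..<n}}"
  have "(\<Sum>\<pi>\<in>?P. perm_act \<sigma> (perm_act \<pi> u)) = (\<Sum>\<pi>\<in>?P. perm_act (\<sigma> \<circ> \<pi>) u)"
    using perm_act_perm_act[OF permutes_bij permutes_bij[OF sigma]] by (intro sum.cong) auto
  also have "\<dots> = (\<Sum>\<pi>\<in>?P. perm_act \<pi> u)"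
    using permutes_compose[OF _ sigma] permutes_compose[OF _ permutes_inv[OF sigma]]
      permutes_inv_o[OF sigma]
    by (intro sum.reindex_bij_witness[where i = "\<lambda>\<pi>. inv \<sigma> \<circ> \<pi>" and j = "\<lambda>\<pi>. \<sigma> \<circ> \<pi>"])
       (auto simp: o_assoc)
  finally show ?thesis
    unfolding perm_average_def perm_act_ncsmul perm_act_sum by simp
qed

lemma cls_perm_average_in_symLnc:
  assumes "u \<in> freeLie n"
  shows "cls n c (perm_average n u) \<in> symLnc n c"
  by (rule cls_in_symLnc_if_invariant[OF perm_average_freeLie[OF assms] perm_act_perm_average])

lemma perm_average_cong:
  fixes u :: "'k::field_char_0 ncpoly"
  assumes G: "\<And>\<pi>. \<pi> permutes {..<n} \<Longrightarrow> G \<pi> \<in> lcs n (c - 1) \<and> perm_act \<pi> u - u - G \<pi> \<in> idealI n c"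
  shows "\<exists>g\<in>lcs n (c - 1). perm_average n u - u - g \<in> idealI n c"
proof
  let ?P = "{\<pi>. \<pi> permutes {..<n}}"
  define g where "g = ncsmul (1 / fact n) (\<Sum>\<pi>\<in>?P. G \<pi>)"
  show "g \<in> lcs n (c - 1)"
    unfolding g_def by (intro ncsubspace_ncsmul[OF ncsubspace_lcs] ncsubspace_sum[OF ncsubspace_lcs]) (use G in blast)
  have card: "card ?P = fact n"
    by (rule card_permutations) simp_all
  have "perm_average n u - u - g = ncsmul (1 / fact n) (\<Sum>\<pi>\<in>?P. perm_act \<pi> u - u - G \<pi>)"
  proof
    fix w
    show "(perm_average n u - u - g) w = ncsmul (1 / fact n) (\<Sum>\<pi>\<in>?P. perm_act \<pi> u - u - G \<pi>) w"
      unfolding perm_average_def g_def minus_apply ncsmul_apply sum_fun_apply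
      by (simp add: sum_subtractf sum.distrib field_simps card)
  qed
  also have "\<dots> \<in> idealI n c"
    by (intro ncsubspace_ncsmul[OF ncsubspace_idealI] ncsubspace_sum[OF ncsubspace_idealI]) (use G in blast)
  finally show "perm_average n u - u - g \<in> idealI n c" .
qed

section \<open>Inner automorphisms preserving symmetric elements\<close>

lemma epsL_eq_epsL_perm_average:
  fixes u :: "'k::field_char_0 ncpoly"
  assumes n: "0 < n" and c: "1 \<le> c" and U: "U \<in> Lnc n c" and u: "u \<in> U"
    and preserves: "\<forall>C\<in>symLnc n c. epsL n c U C \<in> symLnc n c"
  shows "epsL n c U = epsL n c (cls n c (perm_average n u))"
proof -
  let ?s = "var_sum n :: 'k ncpoly"
  have uL: "u \<in> freeLie n"
    using u Lnc_subset_freeLie[OF U] by blast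
  have "cls n c ?s \<in> symLnc n c"
    by (rule cls_in_symLnc_if_invariant[OF var_sum_freeLie perm_act_var_sum])
  moreover have "epsL n c U (cls n c ?s) = cls n c (eps_rep c u ?s)"
    by (rule epsL_eq[OF c U cls_in_Lnc[OF var_sum_freeLie] u self_in_cls[OF var_sum_freeLie]])
  ultimately have sym: "cls n c (eps_rep c u ?s) \<in> symLnc n c"
    using preserves by metis
  have "\<exists>g\<in>lcs n (c - 1). perm_act \<pi> u - u - g \<in> idealI n c" if pi: "\<pi> permutes {..<n}" for \<pi>
  proof (rule eps_rep_var_sum_cong_imp_lcs[OF n uL perm_act_freeLie[OF pi uL]])
    have "perm_act \<pi> (eps_rep c u ?s) - eps_rep c u ?s \<in> idealI n c"
      using sym pi by (simp add: cls_in_symLnc_iff[OF eps_rep_freeLie[OF uL var_sum_freeLie]])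
    then show "eps_rep c (perm_act \<pi> u) ?s - eps_rep c u ?s \<in> idealI n c"
      unfolding perm_act_eps_rep perm_act_var_sum[OF pi] .
    show "linear_coeff_sum n (perm_act \<pi> u) = linear_coeff_sum n u"
      by (rule linear_coeff_sum_perm_act[OF pi])
  qed
  then obtain G where "\<And>\<pi>. \<pi> permutes {..<n} \<Longrightarrow> G \<pi> \<in> lcs n (c - 1) \<and> perm_act \<pi> u - u - G \<pi> \<in> idealI n c"
    by metis
  then obtain g where "g \<in> lcs n (c - 1)" "perm_average n u - u - g \<in> idealI n c"
    using perm_average_cong by blast
  then show ?thesis
    by (rule epsL_cong[OF c U u perm_average_freeLie[OF uL]])
qed

lemma epsL_gcLnc:
  assumes c: "1 \<le> c" and u: "u \<in> freeLie n" and gc: "cls n c u \<in> gcLnc n c"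
  shows "epsL n c (cls n c u) = (idL n c :: 'k::field ncpoly set \<Rightarrow> _)"
proof -
  obtain g where g: "g \<in> lcs n (c - 1)" and eq: "cls n c u = cls n c g"
    using gc unfolding gcLnc_def gammaL_def by blast
  then have "u - g \<in> idealI n c"
    using cls_eq_iff[OF u] lcs_subset_freeLie by blast
  then have "0 - u - (- g) \<in> idealI n c"
    using ncsubspace_uminus[OF ncsubspace_idealI] by fastforce
  then have "epsL n c (cls n c u) = epsL n c (cls n c 0)"
    using ncsubspace_uminus[OF ncsubspace_lcs g]
    by (intro epsL_cong[OF c cls_in_Lnc[OF u] self_in_cls[OF u] zero_in_freeLie])
  then show ?thesis
    using epsL_cls_zero[OF c] by simp
qed

lemma epsL_in_Inn_sym:
  assumes "1 \<le> c" "U \<in> symLnc n c"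
  shows "epsL n c U \<in> (Inn_sym n c :: ('k::field ncpoly set \<Rightarrow> 'k ncpoly set) set)"
  unfolding Inn_sym_def using assms symLnc_imp_Lnc epsL_preserves_symLnc by blast

lemma Inn_sym_cases:
  assumes n: "0 < n" and c: "1 \<le> c"
    and x: "x \<in> (Inn_sym n c :: ('k::field_char_0 ncpoly set \<Rightarrow> 'k ncpoly set) set)"
  shows "x = idL n c \<or> (\<exists>U \<in> symLnc n c - gcLnc n c. x = epsL n c U)"
proof -
  obtain U where x: "x = epsL n c U" and U: "U \<in> Lnc n c"
    and preserves: "\<forall>C\<in>symLnc n c. epsL n c U C \<in> symLnc n c"
    using assms unfolding Inn_sym_def by blast
  obtain u where u: "u \<in> U"
    using Lnc_some_mem[OF U] by blast
  then have uL: "u \<in> freeLie n"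
    using Lnc_subset_freeLie[OF U] by blast
  have "x = epsL n c (cls n c (perm_average n u))"
    unfolding x by (rule epsL_eq_epsL_perm_average[OF n c U u preserves])
  then show ?thesis
    using epsL_gcLnc[OF c perm_average_freeLie[OF uL]] cls_perm_average_in_symLnc[OF uL] by blast
qed

theorem theorem2p3:
  fixes n c :: nat
  assumes "n \<ge> 2" and "c \<ge> 1"
  shows "(Inn_sym n c :: ('k::field_char_0 ncpoly set \<Rightarrow> 'k ncpoly set) set) =
    {epsL n c U | U. U \<in> symLnc n c - (gcLnc n c \<inter> symLnc n c)} \<union> {idL n c}"
proof (intro equalityI subsetI)
  have n: "0 < n" and c: "1 \<le> c"
    using assms by simp_all
  fix x :: "'k ncpoly set \<Rightarrow> 'k ncpoly set"
  show "x \<in> {epsL n c U | U. U \<in> symLnc n c - (gcLnc n c \<inter> symLnc n c)} \<union> {idL n c}"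
    if "x \<in> Inn_sym n c"
    using Inn_sym_cases[OF n c that] by blast
  show "x \<in> Inn_sym n c"
    if "x \<in> {epsL n c U | U. U \<in> symLnc n c - (gcLnc n c \<inter> symLnc n c)} \<union> {idL n c}"
    using that
    by (auto simp: epsL_in_Inn_sym[OF c] epsL_in_Inn_sym[OF c cls_in_symLnc_if_invariant[OF zero_in_freeLie perm_act_zero]]
        simp flip: epsL_cls_zero[OF c])
qed

end
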